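(* Let $\gamma$ be an orientation preserving isometry of $\mathbb{H}^4$. Then for each $k\in\mathcal{K}_\gamma$ there exist $k_1,k_2\in\mathcal{K}_\gamma$ such that $\gamma=H_{k_1}H_k=H_kH_{k_2}$.
   Context: Work in $\mathbb{H}^4$ with boundary $\widehat{\mathbb{R}^3}$; for a circle $k$ bounding a plane $P$, $H_k=H_P$ is the half-turn about $P$, the orientation preserving involution obtained as the composition of reflections across two orthogonal hyperplanes intersecting in $P$. The half-turn bank $\mathcal{K}_\gamma$ is the following set of circles: (i) If $\gamma$ is atomic (type-I elliptic, pure hyperbolic or pure parabolic), $\mathcal{K}_\gamma=\{s\cap t: s\in\mathcal{F}_\gamma,\ t\in\mathcal{T}_\gamma\}$, where: for type-I elliptic $\gamma$ with fixed plane $P$, $\mathcal{F}_\gamma$ = boundaries of hyperplanes containing $P$, $\mathcal{T}_\gamma$ = boundaries of hyperplanes orthogonal to $P$; for pure hyperbolic $\gamma$ with axis $L$, $\mathcal{F}_\gamma$ = boundaries of hyperplanes orthogonal to $L$, $\mathcal{T}_\gamma$ = boundaries of hyperplanes containing $L$; for pure parabolic $\gamma$ conjugated to $x\mapsto x+b$, $\mathcal{F}_\gamma$ = Euclidean planes orthogonal to $b$ (with $\infty$), $\mathcal{T}_\gamma$ = Euclidean planes parallel to $b$ (with $\infty$). (ii) If $\gamma$ is pure loxodromic or screw parabolic, $\gamma=\tau\rho=\rho\tau$ with translation part $\tau$ and rotational part $\rho$ (type-I elliptic with fixed plane $P$, the twisting plane); $\mathcal{K}_\gamma=\{s\cap t: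 s\in\mathcal{F}_\tau,\ t\in\mathcal{R}_\gamma\}$ with $\mathcal{R}_\gamma$ the boundaries of hyperplanes containing $P$. (iii) If $\gamma$ is type-II elliptic (unique fixed point) and not an involution, $\gamma=\rho_1\rho_2$ with $\rho_i$ the unique commuting type-I elliptic isometries whose fixed planes meet orthogonally at the fixed point, and $\mathcal{K}_\gamma=\{s\cap t: s\in\mathcal{F}_{\rho_1},\ t\in\mathcal{F}_{\rho_2}\}$. (iv) If $\gamma$ is a type-II elliptic involution with fixed point $x$, $\mathcal{K}_\gamma$ = boundaries of all planes through $x$. (v) $\mathcal{K}_{\mathrm{id}}$ = boundaries of all planes. *)

theory Defs
  imports "HOL-Analysis.Analysis"
begin

text \<open>Hyperboloid model of H^4 in Minkowski space R^(4,1) = real^5.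
  Coordinate 0 is the time coordinate, coordinates 1..4 are spatial.
  H^4 = {v. mink v v = -1, v$0 > 0}; its ideal boundary (identified with the
  one-point compactification of R^3) is the set of null rays.\<close>

definition mink :: "real^5 \<Rightarrow> real^5 \<Rightarrow> real" where
  "mink x y = x$1 * y$1 + x$2 * y$2 + x$3 * y$3 + x$4 * y$4 - x$0 * y$0"

definition mperp :: "(real^5) set \<Rightarrow> (real^5) set" where
  "mperp S = {v. \<forall>w\<in>S. mink v w = 0}"

definition timelike_subspace :: "(real^5) set \<Rightarrow> bool" where
  "timelike_subspace S \<longleftrightarrow> subspace S \<and> (\<exists>v\<in>S. mink v v < 0)"

text \<open>Totally geodesic k-dimensional subspaces of H^4 correspond to
  (k+1)-dimensional timelike linear subspaces.  A plane of H^4 and the circle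
  bounding it are identified with such a 3-dimensional subspace; a hyperplane
  of H^4 and the 2-sphere bounding it with a 4-dimensional one.\<close>
definition hpoint :: "(real^5) set \<Rightarrow> bool" where
  "hpoint S \<longleftrightarrow> timelike_subspace S \<and> dim S = 1"
definition hline :: "(real^5) set \<Rightarrow> bool" where
  "hline S \<longleftrightarrow> timelike_subspace S \<and> dim S = 2"
definition hplane :: "(real^5) set \<Rightarrow> bool" where
  "hplane S \<longleftrightarrow> timelike_subspace S \<and> dim S = 3"
definition hhyperplane :: "(real^5) set \<Rightarrow> bool" where
  "hhyperplane S \<longleftrightarrow> timelike_subspace S \<and> dim S = 4"

text \<open>A hyperplane U is orthogonal to a (timelike) subspace S (a line or a
  plane) iff its Minkowski normal direction lies in S.\<close>
definition hyp_orth :: "(real^5) set \<Rightarrow> (real^5) set \<Rightarrow> bool" where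
  "hyp_orth U S \<longleftrightarrow> mperp U \<subseteq> S"

definition orient_isom :: "(real^5 \<Rightarrow> real^5) \<Rightarrow> bool" where
  "orient_isom g \<longleftrightarrow> linear g \<and> (\<forall>x y. mink (g x) (g y) = mink x y)
     \<and> det (matrix g) = 1 \<and> (\<forall>v. mink v v < 0 \<and> v$0 > 0 \<longrightarrow> (g v)$0 > 0)"

definition fixspace :: "(real^5 \<Rightarrow> real^5) \<Rightarrow> (real^5) set" where
  "fixspace g = {v. g v = v}"

text \<open>Null eigenvectors = fixed points on the ideal boundary.\<close>
definition fixed_bdry :: "(real^5 \<Rightarrow> real^5) \<Rightarrow> (real^5) set" where
  "fixed_bdry g = {v. v \<noteq> 0 \<and> mink v v = 0 \<and> (\<exists>c. g v = c *\<^sub>R v)}"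

definition elliptic :: "(real^5 \<Rightarrow> real^5) \<Rightarrow> bool" where
  "elliptic g \<longleftrightarrow> orient_isom g \<and> (\<exists>v. mink v v < 0 \<and> g v = v)"

definition loxodromic :: "(real^5 \<Rightarrow> real^5) \<Rightarrow> bool" where
  "loxodromic g \<longleftrightarrow> orient_isom g \<and> \<not> elliptic g \<and>
     (\<exists>u\<in>fixed_bdry g. \<exists>v\<in>fixed_bdry g. \<not> (\<exists>c. v = c *\<^sub>R u))"

definition parabolic :: "(real^5 \<Rightarrow> real^5) \<Rightarrow> bool" where
  "parabolic g \<longleftrightarrow> orient_isom g \<and> \<not> elliptic g \<and> fixed_bdry g \<noteq> {} \<and>
     (\<forall>u\<in>fixed_bdry g. \<forall>v\<in>fixed_bdry g. \<exists>c. v = c *\<^sub>R u)"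

definition elliptic_I :: "(real^5 \<Rightarrow> real^5) \<Rightarrow> bool" where
  "elliptic_I g \<longleftrightarrow> elliptic g \<and> hplane (fixspace g)"
definition elliptic_II :: "(real^5 \<Rightarrow> real^5) \<Rightarrow> bool" where
  "elliptic_II g \<longleftrightarrow> elliptic g \<and> hpoint (fixspace g)"

definition axis :: "(real^5 \<Rightarrow> real^5) \<Rightarrow> (real^5) set" where
  "axis g = span (fixed_bdry g)"

definition pure_hyperbolic :: "(real^5 \<Rightarrow> real^5) \<Rightarrow> bool" where
  "pure_hyperbolic g \<longleftrightarrow> loxodromic g \<and> (\<forall>v\<in>mperp (axis g). g v = v)"

definition pure_loxodromic :: "(real^5 \<Rightarrow> real^5) \<Rightarrow> bool" where
  "pure_loxodromic g \<longleftrightarrow> loxodromic g \<and> \<not> pure_hyperbolic g"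

text \<open>Upper half-space chart of the boundary: x \<in> R^3 corresponds to the null ray of
  (x, (|x|^2-1)/2, (|x|^2+1)/2) (coordinates 1,2,3 ; 4 ; 0), and \<infinity> to the ray of
  (0,0,0,1,1).  The Lorentz transformation inducing x \<mapsto> x + b on the boundary:\<close>
definition par_transl :: "real^3 \<Rightarrow> real^5 \<Rightarrow> real^5" where
  "par_transl b v = (let u = v$0 - v$4; bv = b$1 * v$1 + b$2 * v$2 + b$3 * v$3 in
     (\<chi> i. if i = 1 then v$1 + b$1 * u else if i = 2 then v$2 + b$2 * u
           else if i = 3 then v$3 + b$3 * u else v$i + bv + (b \<bullet> b) / 2 * u))"

text \<open>The hyperplane whose boundary is the Euclidean plane {x. a \<bullet> x = c} \<union> {\<infinity>}
  (for a \<noteq> 0) is the Minkowski orthogonal complement of this vector.\<close>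
definition eucl_normal :: "real^3 \<Rightarrow> real \<Rightarrow> real^5" where
  "eucl_normal a c = (\<chi> i. if i = 1 then a$1 else if i = 2 then a$2
                        else if i = 3 then a$3 else c)"

definition eucl_plane_hyp :: "real^3 \<Rightarrow> real \<Rightarrow> (real^5) set" where
  "eucl_plane_hyp a c = mperp {eucl_normal a c}"

definition par_conj :: "(real^5 \<Rightarrow> real^5) \<Rightarrow> (real^5 \<Rightarrow> real^5) \<Rightarrow> real^3 \<Rightarrow> bool" where
  "par_conj h g b \<longleftrightarrow> orient_isom g \<and> b \<noteq> 0 \<and> h = g \<circ> par_transl b \<circ> inv g"

definition pure_parabolic :: "(real^5 \<Rightarrow> real^5) \<Rightarrow> bool" where
  "pure_parabolic h \<longleftrightarrow> orient_isom h \<and> (\<exists>g b. par_conj h g b)"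

definition screw_parabolic :: "(real^5 \<Rightarrow> real^5) \<Rightarrow> bool" where
  "screw_parabolic h \<longleftrightarrow> parabolic h \<and> \<not> pure_parabolic h"

text \<open>F and T families of a pure parabolic conjugated by g to x \<mapsto> x + b:
  (images under g of) the Euclidean planes orthogonal to b, resp. parallel to b.\<close>
definition parF :: "(real^5 \<Rightarrow> real^5) \<Rightarrow> real^3 \<Rightarrow> (real^5) set set" where
  "parF g b = {g ` eucl_plane_hyp a c | a c. a \<noteq> 0 \<and> (\<exists>l. a = l *\<^sub>R b)}"
definition parT :: "(real^5 \<Rightarrow> real^5) \<Rightarrow> real^3 \<Rightarrow> (real^5) set set" where
  "parT g b = {g ` eucl_plane_hyp a c | a c. a \<noteq> 0 \<and> a \<bullet> b = 0}"

definition halfturn :: "(real^5) set \<Rightarrow> (real^5 \<Rightarrow> real^5)" where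
  "halfturn W = (THE f. linear f \<and> (\<forall>v\<in>W. f v = v) \<and> (\<forall>v\<in>mperp W. f v = - v))"

definition bank :: "(real^5 \<Rightarrow> real^5) \<Rightarrow> (real^5) set set" where
  "bank h = {W. hplane W \<and> (
     \<comment> \<open>(v) identity\<close>
     h = id \<or>
     \<comment> \<open>(iv) type-II elliptic involution\<close>
     (elliptic_II h \<and> h \<circ> h = id \<and> fixspace h \<subseteq> W) \<or>
     \<comment> \<open>(i) type-I elliptic with fixed plane P\<close>
     (elliptic_I h \<and> (\<exists>s t. hhyperplane s \<and> fixspace h \<subseteq> s \<and>
          hhyperplane t \<and> hyp_orth t (fixspace h) \<and> W = s \<inter> t)) \<or>
     \<comment> \<open>(i) pure hyperbolic with axis L\<close>
     (pure_hyperbolic h \<and> (\<exists>s t. hhyperplane s \<and> hyp_orth s (axis h) \<and>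
          hhyperplane t \<and> axis h \<subseteq> t \<and> W = s \<inter> t)) \<or>
     \<comment> \<open>(i) pure parabolic\<close>
     (pure_parabolic h \<and> (\<exists>g b. par_conj h g b \<and>
          (\<exists>s\<in>parF g b. \<exists>t\<in>parT g b. W = s \<inter> t))) \<or>
     \<comment> \<open>(ii) pure loxodromic\<close>
     (pure_loxodromic h \<and> (\<exists>\<tau> \<rho>. pure_hyperbolic \<tau> \<and> elliptic_I \<rho> \<and>
          h = \<tau> \<circ> \<rho> \<and> h = \<rho> \<circ> \<tau> \<and>
          (\<exists>s t. hhyperplane s \<and> hyp_orth s (axis \<tau>) \<and>
                 hhyperplane t \<and> fixspace \<rho> \<subseteq> t \<and> W = s \<inter> t))) \<or>
     \<comment> \<open>(ii) screw parabolic\<close>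
     (screw_parabolic h \<and> (\<exists>\<tau> \<rho> g b. par_conj \<tau> g b \<and> elliptic_I \<rho> \<and>
          h = \<tau> \<circ> \<rho> \<and> h = \<rho> \<circ> \<tau> \<and>
          (\<exists>s\<in>parF g b. \<exists>t. hhyperplane t \<and> fixspace \<rho> \<subseteq> t \<and> W = s \<inter> t))) \<or>
     \<comment> \<open>(iii) type-II elliptic, not an involution\<close>
     (elliptic_II h \<and> h \<circ> h \<noteq> id \<and> (\<exists>\<rho>1 \<rho>2. elliptic_I \<rho>1 \<and> elliptic_I \<rho>2 \<and>
          h = \<rho>1 \<circ> \<rho>2 \<and> h = \<rho>2 \<circ> \<rho>1 \<and>
          fixspace \<rho>1 \<inter> fixspace \<rho>2 = fixspace h \<and> mperp (fixspace \<rho>1) \<subseteq> fixspace \<rho>2 \<and>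
          (\<exists>s t. hhyperplane s \<and> fixspace \<rho>1 \<subseteq> s \<and>
                 hhyperplane t \<and> fixspace \<rho>2 \<subseteq> t \<and> W = s \<inter> t))))}"

end

theory Submission
  imports Defs
begin

text \<open>
  A plane \<open>k = mperp {ns, nt}\<close> with orthogonal spacelike normals has the half-turn
  \<open>H_k = mrefl ns \<circ> mrefl nt\<close>, a product of two commuting reflections. In every case of the
  bank, \<open>\<gamma>\<close> splits into commuting pieces \<open>\<alpha> \<circ> \<beta>\<close> (one possibly the identity), with \<open>\<beta>\<close>
  commuting with \<open>mrefl ns\<close>, such that \<open>\<alpha> \<circ> mrefl ns\<close> and \<open>\<beta> \<circ> mrefl nt\<close> are again
  reflections: a rotation about a plane, a hyperbolic translation or a parabolic translation,
  composed with the reflection in a hyperplane through its fixed plane, orthogonal to its axis,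
  or orthogonal to its direction, is the reflection in another hyperplane of the same kind. Then
  \<open>\<gamma> \<circ> H_k\<close> is a product of two reflections in orthogonal hyperplanes, i.e. a half-turn about
  a plane of the same family, and symmetrically for \<open>H_k \<circ> \<gamma>\<close>. A type-II elliptic involution
  is the point reflection in its fixed point \<open>x\<close>, and \<open>\<gamma> \<circ> H_k\<close> is the half-turn about the
  plane through \<open>x\<close> orthogonal to \<open>k\<close>.
\<close>

lemma exhaust_5:
  fixes x :: 5
  shows "x = 0 \<or> x = 1 \<or> x = 2 \<or> x = 3 \<or> x = 4"
proof (induct x)
  case (of_int z)
  then have "0 \<le> z" "z < 5" by simp_all
  then have "z = 0 \<or> z = 1 \<or> z = 2 \<or> z = 3 \<or> z = 4" by presburger
  then show ?case by auto
qed

lemma all_5: "(\<forall>i::5. P i) \<longleftrightarrow> P 0 \<and> P 1 \<and> P 2 \<and> P 3 \<and> P 4"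
  by (metis exhaust_5)

lemma UNIV_5: "UNIV = {0, 1, 2, 3, 4::5}"
  using exhaust_5 by blast

lemma sum_UNIV_5: "sum f (UNIV::5 set) = f 0 + f 1 + f 2 + f 3 + f 4"
  unfolding UNIV_5 by (simp add: add.assoc)

lemma vec5_eq_iff:
  "(x::real^5) = y \<longleftrightarrow> x$0 = y$0 \<and> x$1 = y$1 \<and> x$2 = y$2 \<and> x$3 = y$3 \<and> x$4 = y$4"
  by (simp add: vec_eq_iff all_5)

section \<open>The Minkowski form\<close>

text \<open>The form is the Euclidean inner product twisted by the reflection in the time axis;
  this reduces orthogonal complements and dimension counts to the Euclidean ones.\<close>

definition time_flip :: "real^5 \<Rightarrow> real^5" where
  "time_flip w = (\<chi> i. if i = 0 then - (w$i) else w$i)"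

lemma mink_eq_inner_time_flip: "mink x y = x \<bullet> time_flip y"
  by (simp add: mink_def inner_vec_def sum_UNIV_5 time_flip_def)

lemma time_flip_time_flip [simp]: "time_flip (time_flip x) = x"
  by (simp add: time_flip_def vec_eq_iff)

lemma linear_time_flip: "linear time_flip"
  by (rule linearI) (auto simp: time_flip_def vec_eq_iff)

lemma inj_time_flip: "inj time_flip"
  by (metis injI time_flip_time_flip)

lemma mink_sym: "mink x y = mink y x"
  by (simp add: mink_def algebra_simps)

lemma mink_add_left: "mink (x + y) z = mink x z + mink y z"
  and mink_add_right: "mink z (x + y) = mink z x + mink z y"
  and mink_diff_left: "mink (x - y) z = mink x z - mink y z"
  and mink_diff_right: "mink z (x - y) = mink z x - mink z y"
  and mink_scale_left: "mink (c *\<^sub>R x) z = c * mink x z"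
  and mink_scale_right: "mink z (c *\<^sub>R x) = c * mink z x"
  and mink_minus_left: "mink (- x) z = - mink x z"
  and mink_minus_right: "mink z (- x) = - mink z x"
  by (simp_all add: mink_def algebra_simps)

lemma mink_zero [simp]: "mink 0 z = 0" "mink z 0 = 0"
  by (simp_all add: mink_def)

lemmas mink_simps = mink_add_left mink_add_right mink_diff_left mink_diff_right
  mink_scale_left mink_scale_right mink_minus_left mink_minus_right

lemma mink_nondegenerate: "(\<And>w. mink v w = 0) \<Longrightarrow> v = 0"
  by (metis inner_eq_zero_iff time_flip_time_flip mink_eq_inner_time_flip)

lemma mink_self_pos_if_time_zero:
  assumes "v$0 = 0" "v \<noteq> 0"
  shows "mink v v > 0"
proof -
  have "v$1 \<noteq> 0 \<or> v$2 \<noteq> 0 \<or> v$3 \<noteq> 0 \<or> v$4 \<noteq> 0" using assms by (auto simp: vec5_eq_iff)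
  moreover have "mink v v = (v$1)^2 + (v$2)^2 + (v$3)^2 + (v$4)^2"
    using assms(1) by (simp add: mink_def power2_eq_square)
  ultimately show ?thesis
    by (smt (verit) not_sum_power2_lt_zero zero_less_power2)
qed

lemma mink_self_nonneg_if_time_zero: "v$0 = 0 \<Longrightarrow> mink v v \<ge> 0"
  using mink_self_pos_if_time_zero[of v] by (cases "v = 0") auto

lemma time_nonzero_if_timelike: "mink y y < 0 \<Longrightarrow> y$0 \<noteq> 0"
  using mink_self_nonneg_if_time_zero[of y] by auto

text \<open>Subtracting the multiple of \<open>u\<close> that kills the time coordinate reduces both
  lemmas below to the positive definiteness of the form on \<open>{v. v$0 = 0}\<close>.\<close>

lemma spacelike_if_orthogonal_timelike:
  assumes u: "mink u u < 0" and "mink u w = 0" and "w \<noteq> 0"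
  shows "mink w w > 0"
proof -
  define c where "c = w$0 / u$0"
  define d where "d = w - c *\<^sub>R u"
  have d0: "d$0 = 0" using time_nonzero_if_timelike[OF u] by (simp add: d_def c_def)
  have dd: "mink d d = mink w w + c^2 * mink u u"
    using assms(2) by (simp add: d_def mink_simps mink_sym[of w u] power2_eq_square algebra_simps)
  show ?thesis
  proof (cases "c = 0")
    case True
    then show ?thesis using mink_self_pos_if_time_zero[OF d0] assms(3) by (simp add: d_def)
  next
    case False
    then have "c^2 * mink u u < 0" using u by (simp add: mult_pos_neg)
    then show ?thesis using dd mink_self_nonneg_if_time_zero[OF d0] by linarith
  qed
qed

lemma collinear_if_orthogonal_null:
  assumes u: "mink u u = 0" "u \<noteq> 0" and w: "mink w w = 0" and "mink u w = 0"
  shows "\<exists>c. w = c *\<^sub>R u"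
proof -
  have u0: "u$0 \<noteq> 0" using mink_self_pos_if_time_zero[of u] u by auto
  define c where "c = w$0 / u$0"
  define d where "d = w - c *\<^sub>R u"
  have d0: "d$0 = 0" using u0 by (simp add: d_def c_def)
  have "mink d d = 0"
    using assms by (simp add: d_def mink_simps mink_sym[of w u])
  then have "d = 0" using mink_self_pos_if_time_zero[OF d0] by fastforce
  then show ?thesis by (auto simp: d_def)
qed

lemma null_timelike_not_orthogonal:
  assumes "mink u u = 0" "u \<noteq> 0" "mink x x < 0"
  shows "mink u x \<noteq> 0"
  using spacelike_if_orthogonal_timelike[of x u] assms by (auto simp: mink_sym)

lemma timelike_combination_of_null:
  assumes "mink u u = 0" "mink w w = 0" "mink u w \<noteq> 0"
  shows "mink (u - mink u w *\<^sub>R w) (u - mink u w *\<^sub>R w) < 0"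
proof -
  have "mink (u - mink u w *\<^sub>R w) (u - mink u w *\<^sub>R w) = - 2 * (mink u w * mink u w)"
    using assms by (simp add: mink_simps mink_sym[of w u])
  moreover have "mink u w * mink u w > 0" using assms(3) by (metis not_real_square_gt_zero)
  ultimately show ?thesis by simp
qed

section \<open>Minkowski orthogonal complements\<close>

lemma subspace_mperp: "subspace (mperp S)"
  by (auto simp: subspace_def mperp_def mink_simps)

lemma mperp_eq_orthogonal_comp: "mperp S = orthogonal_comp (time_flip ` S)"
  by (auto simp: mperp_def orthogonal_comp_def orthogonal_def mink_eq_inner_time_flip inner_commute)

lemma mperp_antimono: "A \<subseteq> B \<Longrightarrow> mperp B \<subseteq> mperp A"
  by (auto simp: mperp_def)

lemma mperp_pair: "mperp {a} \<inter> mperp {b} = mperp {a, b}"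
  by (auto simp: mperp_def)

lemma mperp_span: "mperp (span S) = mperp S"
proof
  show "mperp (span S) \<subseteq> mperp S" by (rule mperp_antimono) (rule span_superset)
next
  show "mperp S \<subseteq> mperp (span S)"
  proof
    fix v assume v: "v \<in> mperp S"
    have "subspace {w. mink v w = 0}"
      by (auto simp: subspace_def mink_simps)
    moreover have "S \<subseteq> {w. mink v w = 0}" using v by (auto simp: mperp_def)
    ultimately have "span S \<subseteq> {w. mink v w = 0}" by (metis span_minimal)
    then show "v \<in> mperp (span S)" by (auto simp: mperp_def)
  qed
qed

lemma dim_mperp_add:
  assumes "subspace S"
  shows "dim (mperp S) + dim S = 5"
proof -
  have "subspace (time_flip ` S)" by (rule linear_subspace_image[OF linear_time_flip assms])
  then have "dim {y \<in> UNIV. \<forall>x \<in> time_flip ` S. orthogonal x y} + dim (time_flip ` S)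
      = dim (UNIV :: (real^5) set)"
    by (rule dim_subspace_orthogonal_to_vectors[OF _ subspace_UNIV]) simp
  moreover have "{y \<in> UNIV. \<forall>x \<in> time_flip ` S. orthogonal x y} = mperp S"
    by (auto simp: mperp_eq_orthogonal_comp orthogonal_comp_def)
  moreover have "dim (time_flip ` S) = dim S"
    by (rule dim_image_eq[OF linear_time_flip]) (meson inj_time_flip inj_on_subset subset_UNIV)
  ultimately show ?thesis by simp
qed

lemma mperp_mperp:
  assumes "subspace S"
  shows "mperp (mperp S) = S"
proof -
  have "S \<subseteq> mperp (mperp S)" by (auto simp: mperp_def mink_sym)
  moreover have "dim (mperp (mperp S)) = dim S"
    using dim_mperp_add[OF assms] dim_mperp_add[OF subspace_mperp, of S] by simp
  ultimately show ?thesis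
    by (metis assms subspace_dim_equal subspace_mperp order_refl)
qed

lemma mperp_mperp_singleton: "mperp (mperp {a}) = span {a}"
  by (metis mperp_mperp mperp_span subspace_span)

lemma decompose_mperp:
  assumes S: "subspace S" and nondeg: "S \<inter> mperp S \<subseteq> {0}"
  shows "\<exists>a b. a \<in> S \<and> b \<in> mperp S \<and> v = a + b"
proof -
  let ?T = "{x + y |x y. x \<in> S \<and> y \<in> mperp S}"
  have sub: "subspace ?T" using subspace_sums[OF S subspace_mperp] by (simp add: set_plus_def)
  have "dim ?T + dim (S \<inter> mperp S) = dim S + dim (mperp S)"
    by (rule dim_sums_Int[OF S subspace_mperp])
  moreover have "S \<inter> mperp S = {0}" using nondeg S subspace_0 subspace_mperp by blast
  ultimately have "dim ?T = 5" using dim_mperp_add[OF S] by simp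
  then have "span ?T = UNIV" using dim_eq_full[of ?T] by simp
  then have "?T = UNIV" using sub span_eq_iff[of ?T] by simp
  then show ?thesis by blast
qed

lemma timelike_subspace_Int_mperp:
  assumes "timelike_subspace S"
  shows "S \<inter> mperp S \<subseteq> {0}"
proof
  fix w assume w: "w \<in> S \<inter> mperp S"
  obtain u where u: "u \<in> S" "mink u u < 0" using assms by (auto simp: timelike_subspace_def)
  have "mink w u = 0" "mink w w = 0" using w u by (auto simp: mperp_def)
  then show "w \<in> {0}" using spacelike_if_orthogonal_timelike[OF u(2), of w] by (auto simp: mink_sym)
qed

lemma decompose_mperp_timelike:
  assumes "timelike_subspace S"
  shows "\<exists>a b. a \<in> S \<and> b \<in> mperp S \<and> v = a + b"
  using assms decompose_mperp timelike_subspace_Int_mperp by (auto simp: timelike_subspace_def)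

lemma spacelike_in_mperp_timelike:
  assumes "timelike_subspace S" "v \<in> mperp S" "v \<noteq> 0"
  shows "mink v v > 0"
proof -
  obtain u where u: "u \<in> S" "mink u u < 0" using assms by (auto simp: timelike_subspace_def)
  have "mink u v = 0" using assms u by (auto simp: mperp_def mink_sym)
  then show ?thesis using spacelike_if_orthogonal_timelike[OF u(2)] assms by auto
qed

definition time_unit :: "real^5" where "time_unit = (\<chi> i. if i = 0 then 1 else 0)"

lemma mink_time_unit: "mink time_unit time_unit = -1"
  by (simp add: time_unit_def mink_def)

lemma timelike_mperp_if_spacelike:
  assumes S: "subspace S" and pos: "\<forall>v\<in>S. v \<noteq> 0 \<longrightarrow> mink v v > 0"
  shows "timelike_subspace (mperp S)"
proof -
  have "S \<inter> mperp S \<subseteq> {0}"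
  proof
    fix v assume "v \<in> S \<inter> mperp S"
    then have "v \<in> S" "mink v v = 0" by (auto simp: mperp_def)
    then show "v \<in> {0}" using pos by fastforce
  qed
  then obtain a b where ab: "a \<in> S" "b \<in> mperp S" "time_unit = a + b"
    using decompose_mperp[OF S] by blast
  have "mink a b = 0" using ab by (auto simp: mperp_def mink_sym)
  then have "-1 = mink a a + mink b b"
    using mink_time_unit unfolding ab(3) by (simp add: mink_simps mink_sym[of b a])
  moreover have "mink a a \<ge> 0" using pos ab by (cases "a = 0") auto
  ultimately have "mink b b < 0" by linarith
  then show ?thesis using ab(2) subspace_mperp by (auto simp: timelike_subspace_def)
qed

section \<open>Reflections and isometries\<close>

definition mrefl :: "real^5 \<Rightarrow> real^5 \<Rightarrow> real^5" where
  "mrefl n v = v - (2 * mink v n / mink n n) *\<^sub>R n"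

definition mink_isom :: "(real^5 \<Rightarrow> real^5) \<Rightarrow> bool" where
  "mink_isom h \<longleftrightarrow> linear h \<and> (\<forall>x y. mink (h x) (h y) = mink x y)"

lemma orient_isom_imp_mink_isom: "orient_isom g \<Longrightarrow> mink_isom g"
  by (simp add: orient_isom_def mink_isom_def)

lemma linear_mrefl: "linear (mrefl n)"
  by (rule linearI) (auto simp: mrefl_def mink_simps algebra_simps add_divide_distrib)

lemma mrefl_self: "mink n n \<noteq> 0 \<Longrightarrow> mrefl n n = - n"
  by (simp add: mrefl_def vec_eq_iff)

lemma mrefl_fixes_mperp: "mink v n = 0 \<Longrightarrow> mrefl n v = v"
  by (simp add: mrefl_def)

lemma mrefl_mrefl: "mink n n \<noteq> 0 \<Longrightarrow> mrefl n (mrefl n v) = v"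
  by (simp add: mrefl_def mink_simps field_simps)

lemma mrefl_commute: "mink n m = 0 \<Longrightarrow> mrefl n (mrefl m v) = mrefl m (mrefl n v)"
  by (simp add: mrefl_def mink_simps mink_sym[of m n] algebra_simps)

lemma mink_isom_mrefl_conj:
  assumes "mink_isom h"
  shows "h (mrefl n v) = mrefl (h n) (h v)"
  using assms by (simp add: mrefl_def mink_isom_def linear_diff linear_scale)

lemma mink_isom_comp: "mink_isom f \<Longrightarrow> mink_isom g \<Longrightarrow> mink_isom (f \<circ> g)"
  by (auto simp: mink_isom_def linear_compose)

lemma mink_isom_inj:
  assumes "mink_isom f"
  shows "inj f"
proof (rule injI)
  fix x y assume "f x = f y"
  then have "f (x - y) = 0" using assms by (simp add: mink_isom_def linear_diff)
  then have "\<And>w. mink (x - y) w = 0"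
    using assms by (metis mink_isom_def mink_zero(1))
  then show "x = y" using mink_nondegenerate[of "x - y"] by auto
qed

lemma mink_isom_surj: "mink_isom f \<Longrightarrow> surj f"
  using linear_injective_imp_surjective[of f] mink_isom_inj by (auto simp: mink_isom_def)

lemma mink_isom_inv:
  assumes "mink_isom f"
  shows "mink_isom (inv f)"
proof -
  have "linear (inv f)"
    using assms mink_isom_inj inj_linear_imp_inv_linear by (auto simp: mink_isom_def)
  moreover have "mink (inv f x) (inv f y) = mink x y" for x y
  proof -
    have "mink (inv f x) (inv f y) = mink (f (inv f x)) (f (inv f y))"
      using assms by (simp add: mink_isom_def)
    also have "\<dots> = mink x y" using mink_isom_surj[OF assms] by (simp add: surj_f_inv_f)
    finally show ?thesis .
  qed
  ultimately show ?thesis by (simp add: mink_isom_def)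
qed

lemma mink_isom_f_inv_f: "mink_isom f \<Longrightarrow> f (inv f v) = v"
  by (simp add: mink_isom_surj surj_f_inv_f)

lemma mink_isom_inv_f_f: "mink_isom f \<Longrightarrow> inv f (f v) = v"
  by (simp add: mink_isom_inj)

lemma mrefl_comp_mink_isom:
  assumes "mink_isom \<rho>"
  shows "mrefl n \<circ> \<rho> = \<rho> \<circ> mrefl (inv \<rho> n)"
  using mink_isom_mrefl_conj[OF assms] mink_isom_f_inv_f[OF assms] by auto

lemma mink_isom_commutes_mrefl:
  assumes "mink_isom h" "h n = n"
  shows "h \<circ> mrefl n = mrefl n \<circ> h"
  using mink_isom_mrefl_conj[OF assms(1)] assms(2) by auto

lemma mink_isom_image_mperp_singleton:
  assumes g: "mink_isom g"
  shows "g ` mperp {e} = mperp {g e}"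
proof
  have mi: "\<And>x y. mink (g x) (g y) = mink x y" using g by (simp add: mink_isom_def)
  show "g ` mperp {e} \<subseteq> mperp {g e}" by (auto simp: mperp_def mi)
  show "mperp {g e} \<subseteq> g ` mperp {e}"
  proof
    fix x assume x: "x \<in> mperp {g e}"
    have "mink (inv g x) e = mink (g (inv g x)) (g e)" by (simp add: mi)
    then have "inv g x \<in> mperp {e}" using x mink_isom_f_inv_f[OF g] by (simp add: mperp_def)
    then show "x \<in> g ` mperp {e}" using mink_isom_f_inv_f[OF g] by (metis image_eqI)
  qed
qed

lemma fixspace_preserves_mperp:
  assumes "mink_isom \<rho>" "v \<in> mperp (fixspace \<rho>)"
  shows "\<rho> v \<in> mperp (fixspace \<rho>)" "inv \<rho> v \<in> mperp (fixspace \<rho>)"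
proof -
  have mi: "\<And>x y. mink (\<rho> x) (\<rho> y) = mink x y" using assms(1) by (simp add: mink_isom_def)
  have "mink (\<rho> v) w = mink v w" "mink (inv \<rho> v) w = mink v w" if "w \<in> fixspace \<rho>" for w
    using that mi[of v w] mi[of "inv \<rho> v" w] mink_isom_f_inv_f[OF assms(1), of v]
    by (simp_all add: fixspace_def)
  then show "\<rho> v \<in> mperp (fixspace \<rho>)" "inv \<rho> v \<in> mperp (fixspace \<rho>)"
    using assms(2) by (auto simp: mperp_def)
qed

section \<open>Half-turns as products of two reflections\<close>

lemma span_pair_iff: "v \<in> span {a, b} \<longleftrightarrow> (\<exists>x y. v = x *\<^sub>R a + y *\<^sub>R b)"
proof
  assume "v \<in> span {a, b}"
  then obtain k where "v - k *\<^sub>R a \<in> span {b}" by (auto simp: span_insert)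
  then obtain l where "v - k *\<^sub>R a = l *\<^sub>R b" by (auto simp: span_singleton)
  then have "v = k *\<^sub>R a + l *\<^sub>R b" by (simp add: algebra_simps)
  then show "\<exists>x y. v = x *\<^sub>R a + y *\<^sub>R b" by blast
next
  assume "\<exists>x y. v = x *\<^sub>R a + y *\<^sub>R b"
  then show "v \<in> span {a, b}" by (auto simp: span_add span_scale span_base)
qed

definition normal_pair :: "real^5 \<Rightarrow> real^5 \<Rightarrow> bool" where
  "normal_pair n1 n2 \<longleftrightarrow> mink n1 n1 > 0 \<and> mink n2 n2 > 0 \<and> mink n1 n2 = 0"

lemma normal_pair_independent:
  assumes "normal_pair n1 n2"
  shows "independent {n1, n2}" "n1 \<noteq> n2"
proof -
  show "n1 \<noteq> n2" using assms by (auto simp: normal_pair_def)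
  have "n1 \<notin> span {n2}"
  proof
    assume "n1 \<in> span {n2}"
    then obtain x where "n1 = x *\<^sub>R n2" by (auto simp: span_singleton)
    then show False using assms by (auto simp: normal_pair_def mink_simps)
  qed
  then show "independent {n1, n2}" using assms by (auto simp: normal_pair_def independent_insert)
qed

lemma normal_pair_span_spacelike:
  assumes "normal_pair n1 n2" "v \<in> span {n1, n2}" "v \<noteq> 0"
  shows "mink v v > 0"
proof -
  obtain x y where v: "v = x *\<^sub>R n1 + y *\<^sub>R n2" using assms(2) by (auto simp: span_pair_iff)
  have "mink v v = x^2 * mink n1 n1 + y^2 * mink n2 n2"
    using assms(1) by (simp add: v normal_pair_def mink_simps mink_sym[of n2 n1] power2_eq_square algebra_simps)
  moreover have "x \<noteq> 0 \<or> y \<noteq> 0" using assms(3) v by auto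
  ultimately show ?thesis
    using assms(1) unfolding normal_pair_def
    by (smt (verit) mult_nonneg_nonneg mult_pos_pos zero_le_power2 zero_less_power2)
qed

lemma hplane_mperp_normal_pair:
  assumes "normal_pair n1 n2"
  shows "hplane (mperp {n1, n2})"
proof -
  have "timelike_subspace (mperp (span {n1, n2}))"
    using timelike_mperp_if_spacelike[OF subspace_span] normal_pair_span_spacelike[OF assms] by blast
  moreover have "dim (span {n1, n2}) = 2"
    using normal_pair_independent[OF assms] by (simp add: dim_eq_card_independent)
  ultimately show ?thesis
    using dim_mperp_add[of "span {n1, n2}"] by (simp add: hplane_def mperp_span)
qed

lemma hhyperplane_mperp_singleton:
  assumes "mink n n > 0"
  shows "hhyperplane (mperp {n})"
proof -
  have "mink v v > 0" if v: "v \<in> span {n}" "v \<noteq> 0" for v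
  proof -
    obtain k where k: "v = k *\<^sub>R n" "k \<noteq> 0" using v by (auto simp: span_singleton)
    then have "k * k > 0" by (metis not_real_square_gt_zero)
    then show ?thesis using assms k(1) by (simp add: mink_simps mult.assoc[symmetric])
  qed
  then have "timelike_subspace (mperp (span {n}))"
    using timelike_mperp_if_spacelike[OF subspace_span] by blast
  moreover have "dim (span {n}) = 1" using assms by auto
  ultimately show ?thesis
    using dim_mperp_add[of "span {n}"] by (simp add: hhyperplane_def mperp_span)
qed

lemma exists_nonzero_if_dim_pos:
  fixes Q :: "(real^5) set"
  assumes "dim Q > 0"
  obtains n where "n \<in> Q" "n \<noteq> 0"
proof -
  have "\<not> Q \<subseteq> {0}"
  proof
    assume "Q \<subseteq> {0}"
    then have "dim Q \<le> dim {0::real^5}" by (rule dim_subset)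
    moreover have "dim {0::real^5} = 0" by simp
    ultimately show False using assms by linarith
  qed
  then show ?thesis using that by blast
qed

lemma span_singleton_eq_if_dim_1:
  fixes Q :: "(real^5) set"
  assumes "subspace Q" "dim Q = 1" "n \<in> Q" "n \<noteq> 0"
  shows "span {n} = Q"
proof -
  have "span {n} \<subseteq> Q" using assms by (simp add: span_minimal)
  moreover have "dim Q \<le> dim (span {n})" using assms by simp
  ultimately show ?thesis using subspace_dim_equal[OF subspace_span assms(1)] by blast
qed

lemma hhyperplane_normal:
  assumes "hhyperplane s"
  obtains n where "mink n n > 0" "s = mperp {n}"
proof -
  have s: "subspace s" "dim s = 4" "timelike_subspace s"
    using assms by (auto simp: hhyperplane_def timelike_subspace_def)
  then have dim: "dim (mperp s) = 1" using dim_mperp_add[of s] by simp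
  then obtain n where n: "n \<in> mperp s" "n \<noteq> 0"
    using exists_nonzero_if_dim_pos[of "mperp s"] by auto
  have "span {n} = mperp s"
    using span_singleton_eq_if_dim_1[OF subspace_mperp dim n] .
  then have "s = mperp {n}" using mperp_mperp[OF s(1)] by (metis mperp_span)
  moreover have "mink n n > 0" using spacelike_in_mperp_timelike[OF s(3) n] .
  ultimately show ?thesis using that by blast
qed

lemma halfturn_unique:
  assumes W: "hplane W" and f: "linear f" "\<forall>v\<in>W. f v = v" "\<forall>v\<in>mperp W. f v = - v"
  shows "halfturn W = f"
  unfolding halfturn_def
proof (rule the_equality)
  show "linear f \<and> (\<forall>v\<in>W. f v = v) \<and> (\<forall>v\<in>mperp W. f v = - v)" using f by blast
next
  fix g assume g: "linear g \<and> (\<forall>v\<in>W. g v = v) \<and> (\<forall>v\<in>mperp W. g v = - v)"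
  show "g = f"
  proof
    fix v
    have "timelike_subspace W" using W by (simp add: hplane_def)
    then obtain a b where "a \<in> W" "b \<in> mperp W" "v = a + b"
      using decompose_mperp_timelike by blast
    then show "g v = f v" using g f by (simp add: linear_add)
  qed
qed

lemma halfturn_mperp_normal_pair:
  assumes n: "normal_pair n1 n2"
  shows "halfturn (mperp {n1, n2}) = mrefl n1 \<circ> mrefl n2"
proof (rule halfturn_unique[OF hplane_mperp_normal_pair[OF n] linear_compose[OF linear_mrefl linear_mrefl]])
  show "\<forall>v\<in>mperp {n1, n2}. (mrefl n1 \<circ> mrefl n2) v = v"
    by (auto simp: mperp_def mrefl_fixes_mperp)
  show "\<forall>v\<in>mperp (mperp {n1, n2}). (mrefl n1 \<circ> mrefl n2) v = - v"
  proof
    fix v assume "v \<in> mperp (mperp {n1, n2})"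
    then have "v \<in> span {n1, n2}" by (metis mperp_mperp mperp_span subspace_span)
    then obtain x y where v: "v = x *\<^sub>R n1 + y *\<^sub>R n2" by (auto simp: span_pair_iff)
    have o: "mink n1 n2 = 0" "mink n2 n1 = 0" "mink n1 n1 \<noteq> 0" "mink n2 n2 \<noteq> 0"
      using n by (auto simp: normal_pair_def mink_sym)
    have "mrefl n2 v = x *\<^sub>R n1 - y *\<^sub>R n2"
      using o by (simp add: mrefl_def v mink_simps vec_eq_iff algebra_simps)
    moreover have "mrefl n1 (x *\<^sub>R n1 - y *\<^sub>R n2) = - v"
      using o by (simp add: mrefl_def v mink_simps vec_eq_iff algebra_simps)
    ultimately show "(mrefl n1 \<circ> mrefl n2) v = - v" by simp
  qed
qed

lemma hplane_complete_normal_pair: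
  assumes W: "hplane W" and n: "n \<in> mperp W" "n \<noteq> 0"
  obtains m where "normal_pair n m" "mink m m = mink n n" "span {n, m} = mperp W"
proof -
  have sW: "subspace W" and tW: "timelike_subspace W" and dQ: "dim (mperp W) = 2"
    using W dim_mperp_add[of W] by (auto simp: hplane_def timelike_subspace_def)
  have pos: "\<And>v. v \<in> mperp W \<Longrightarrow> v \<noteq> 0 \<Longrightarrow> mink v v > 0"
    using spacelike_in_mperp_timelike[OF tW] by blast
  have N: "mink n n > 0" using pos n by blast
  have "\<not> mperp W \<subseteq> span {n}"
  proof
    assume "mperp W \<subseteq> span {n}"
    then have "dim (mperp W) \<le> dim (span {n})" by (rule dim_subset)
    then show False using dQ n by simp
  qed
  then obtain q where q: "q \<in> mperp W" "q \<notin> span {n}" by blast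
  define m0 where "m0 = q - (mink q n / mink n n) *\<^sub>R n"
  have m0: "m0 \<in> mperp W" using q n subspace_mperp by (simp add: m0_def subspace_diff subspace_scale)
  have "m0 \<noteq> 0" using q(2) by (auto simp: m0_def span_singleton)
  then have M0: "mink m0 m0 > 0" using pos m0 by blast
  have o: "mink n m0 = 0" using N by (simp add: m0_def mink_simps mink_sym[of n q])
  define m where "m = sqrt (mink n n / mink m0 m0) *\<^sub>R m0"
  have mQ: "m \<in> mperp W" using m0 subspace_mperp by (simp add: m_def subspace_scale)
  have mm: "mink m m = mink n n"
    using N M0 by (simp add: m_def mink_simps mult.assoc[symmetric])
  have pair: "normal_pair n m" using N mm o by (simp add: normal_pair_def m_def mink_simps)
  have "span {n, m} \<subseteq> mperp W" using n mQ subspace_mperp by (simp add: span_minimal)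
  moreover have "dim (span {n, m}) = 2"
    using normal_pair_independent[OF pair] by (simp add: dim_eq_card_independent)
  ultimately have "span {n, m} = mperp W"
    using dQ subspace_mperp subspace_dim_equal subspace_span by (metis order_refl)
  then show ?thesis using that pair mm by blast
qed

lemma hplane_normal_pair:
  assumes "hplane W"
  obtains n1 n2 where "normal_pair n1 n2" "W = mperp {n1, n2}"
proof -
  have sW: "subspace W" and "dim (mperp W) = 2"
    using assms dim_mperp_add[of W] by (auto simp: hplane_def timelike_subspace_def)
  then obtain n where n: "n \<in> mperp W" "n \<noteq> 0" using exists_nonzero_if_dim_pos[of "mperp W"] by auto
  obtain m where "normal_pair n m" "span {n, m} = mperp W"
    using hplane_complete_normal_pair[OF assms n] by blast
  moreover have "W = mperp {n, m}" using mperp_mperp[OF sW] calculation(2) by (metis mperp_span)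
  ultimately show ?thesis using that by blast
qed

lemma halfturn_halfturn:
  assumes "hplane W"
  shows "halfturn W \<circ> halfturn W = id"
proof -
  obtain n1 n2 where n: "normal_pair n1 n2" "W = mperp {n1, n2}"
    using hplane_normal_pair[OF assms] by blast
  then have o: "mink n1 n2 = 0" "mink n1 n1 \<noteq> 0" "mink n2 n2 \<noteq> 0" by (auto simp: normal_pair_def)
  show ?thesis
    using n o by (simp add: fun_eq_iff halfturn_mperp_normal_pair mrefl_commute[OF o(1)] mrefl_mrefl)
qed

lemma subset_mperp_singleton_iff: "S \<subseteq> mperp {n} \<longleftrightarrow> n \<in> mperp S"
  by (auto simp: mperp_def mink_sym)

lemma hyp_orth_mperp_singleton_iff: "subspace S \<Longrightarrow> hyp_orth (mperp {n}) S \<longleftrightarrow> n \<in> S"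
  using span_minimal[of "{n}" S] by (auto simp: hyp_orth_def mperp_mperp_singleton intro: span_base)

lemma normal_pair_hhyperplanes:
  assumes "normal_pair a b"
  shows "hplane (mperp {a, b})" "hhyperplane (mperp {a})" "hhyperplane (mperp {b})"
    "mperp {a, b} = mperp {a} \<inter> mperp {b}"
  using assms hplane_mperp_normal_pair hhyperplane_mperp_singleton mperp_pair
  by (auto simp: normal_pair_def)

section \<open>Factorisations through a pair of reflections\<close>

lemma halfturn_factor_left:
  assumes k: "normal_pair ns nt" and k1: "normal_pair a b"
    and \<gamma>: "\<gamma> = \<alpha> \<circ> \<beta>" and comm: "\<beta> \<circ> mrefl ns = mrefl ns \<circ> \<beta>"
    and a: "\<alpha> \<circ> mrefl ns = mrefl a" and b: "\<beta> \<circ> mrefl nt = mrefl b"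
  shows "\<gamma> = halfturn (mperp {a, b}) \<circ> halfturn (mperp {ns, nt})"
proof -
  have "\<gamma> \<circ> halfturn (mperp {ns, nt}) = (\<alpha> \<circ> mrefl ns) \<circ> (\<beta> \<circ> mrefl nt)"
    using fun_cong[OF comm] by (simp add: halfturn_mperp_normal_pair[OF k] \<gamma> fun_eq_iff)
  then have "\<gamma> \<circ> halfturn (mperp {ns, nt}) = halfturn (mperp {a, b})"
    by (simp add: a b halfturn_mperp_normal_pair[OF k1])
  then show ?thesis
    using halfturn_halfturn[OF hplane_mperp_normal_pair[OF k]] by (metis comp_assoc comp_id)
qed

lemma halfturn_factor_right:
  assumes k: "normal_pair ns nt" and k2: "normal_pair a b"
    and \<gamma>: "\<gamma> = \<alpha> \<circ> \<beta>" and comm: "\<alpha> \<circ> mrefl nt = mrefl nt \<circ> \<alpha>"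
    and a: "mrefl ns \<circ> \<alpha> = mrefl a" and b: "mrefl nt \<circ> \<beta> = mrefl b"
  shows "\<gamma> = halfturn (mperp {ns, nt}) \<circ> halfturn (mperp {a, b})"
proof -
  have "halfturn (mperp {ns, nt}) \<circ> \<gamma> = (mrefl ns \<circ> \<alpha>) \<circ> (mrefl nt \<circ> \<beta>)"
    using fun_cong[OF comm] by (simp add: halfturn_mperp_normal_pair[OF k] \<gamma> fun_eq_iff)
  then have "halfturn (mperp {ns, nt}) \<circ> \<gamma> = halfturn (mperp {a, b})"
    by (simp add: a b halfturn_mperp_normal_pair[OF k2])
  then show ?thesis
    using halfturn_halfturn[OF hplane_mperp_normal_pair[OF k]] by (metis comp_assoc id_comp)
qed

section \<open>Rotations about a plane\<close>

lemma mink_frame: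
  assumes "normal_pair n m" "mink m m = mink n n"
  shows "mink (x *\<^sub>R n + y *\<^sub>R m) (z *\<^sub>R n + w *\<^sub>R m) = (x*z + y*w) * mink n n"
  using assms by (simp add: normal_pair_def mink_simps mink_sym[of m n] algebra_simps)

lemma mrefl_frame:
  assumes nm: "normal_pair n m" "mink m m = mink n n" and pq: "p*p + q*q > 0"
  shows "mrefl (p *\<^sub>R n + q *\<^sub>R m) (x *\<^sub>R n + y *\<^sub>R m) =
     (x - 2*(x*p+y*q)*p/(p*p+q*q)) *\<^sub>R n + (y - 2*(x*p+y*q)*q/(p*p+q*q)) *\<^sub>R m"
proof -
  have "2 * mink (x *\<^sub>R n + y *\<^sub>R m) (p *\<^sub>R n + q *\<^sub>R m) / mink (p *\<^sub>R n + q *\<^sub>R m) (p *\<^sub>R n + q *\<^sub>R m)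
      = 2*(x*p+y*q)/(p*p+q*q)"
    using nm pq by (simp add: mink_frame normal_pair_def)
  then show ?thesis unfolding mrefl_def
    by (simp add: vec_eq_iff algebra_simps add_divide_distrib diff_divide_distrib)
qed

lemma linear_eq_on_timelike_and_mperp:
  assumes "linear f" "linear g" "timelike_subspace S"
    and "\<And>v. v \<in> S \<Longrightarrow> f v = g v" "\<And>v. v \<in> mperp S \<Longrightarrow> f v = g v"
  shows "f = g"
proof
  fix v
  obtain a b where "a \<in> S" "b \<in> mperp S" "v = a + b"
    using decompose_mperp_timelike[OF assms(3)] by blast
  then show "f v = g v" using assms by (simp add: linear_add)
qed

lemma unit_orthogonal_pair_cases:
  fixes a b c d :: real
  assumes e1: "a*a + b*b = 1" and e2: "c*c + d*d = 1" and e3: "a*c + b*d = 0"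
  shows "(c = -b \<and> d = a) \<or> (c = b \<and> d = -a)"
proof -
  have "(a*d - b*c)^2 = (a*a + b*b)*(c*c + d*d) - (a*c + b*d)^2"
    by (simp add: power2_eq_square algebra_simps)
  then have "a*d - b*c = 1 \<or> a*d - b*c = -1" using e1 e2 e3 by (simp add: power2_eq_1_iff)
  moreover have "(c + b)^2 + (d - a)^2 = 2 - 2*(a*d - b*c)" "(c - b)^2 + (d + a)^2 = 2 + 2*(a*d - b*c)"
    using e1 e2 by (simp_all add: power2_eq_square algebra_simps)
  ultimately have "(c + b)^2 + (d - a)^2 = 0 \<or> (c - b)^2 + (d + a)^2 = 0" by auto
  then show ?thesis by (auto simp: sum_power2_eq_zero_iff)
qed

text \<open>An isometry whose fixed space is exactly a plane acts on the normal plane by an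
  orthogonal map without fixed vectors, i.e. by a rotation through a nonzero angle.\<close>

lemma rotation_in_normal_frame:
  assumes iso: "mink_isom \<rho>" and P: "hplane (fixspace \<rho>)"
    and nm: "normal_pair n m" "mink m m = mink n n" "span {n, m} = mperp (fixspace \<rho>)"
  obtains a b where "\<rho> n = a *\<^sub>R n + b *\<^sub>R m" "\<rho> m = (-b) *\<^sub>R n + a *\<^sub>R m"
    "a*a + b*b = 1" "a \<noteq> 1"
proof -
  let ?P = "fixspace \<rho>"
  have lin: "linear \<rho>" and mi: "\<And>x y. mink (\<rho> x) (\<rho> y) = mink x y"
    using iso by (auto simp: mink_isom_def)
  have N: "mink n n > 0" using nm by (simp add: normal_pair_def)
  have nQ: "n \<in> mperp ?P" "m \<in> mperp ?P" using nm(3) by (auto intro: span_base)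
  have no_fixed: "v = 0" if "v \<in> mperp ?P" "\<rho> v = v" for v
    using that timelike_subspace_Int_mperp P by (auto simp: hplane_def fixspace_def)
  obtain a b where ab: "\<rho> n = a *\<^sub>R n + b *\<^sub>R m"
    using fixspace_preserves_mperp(1)[OF iso nQ(1)] nm(3) span_pair_iff by metis
  obtain c d where cd: "\<rho> m = c *\<^sub>R n + d *\<^sub>R m"
    using fixspace_preserves_mperp(1)[OF iso nQ(2)] nm(3) span_pair_iff by metis
  have e: "a*a + b*b = 1" "c*c + d*d = 1" "a*c + b*d = 0"
    using mi[of n n] mi[of m m] mi[of n m] N nm
    by (simp_all add: ab cd mink_frame normal_pair_def)
  have proper: "c = -b \<and> d = a"
  proof (rule ccontr)
    \<comment> \<open>a reflection of the normal plane fixes both \<open>v1\<close> and \<open>v2\<close> below, which cannot both vanish\<close>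
    assume "\<not> (c = -b \<and> d = a)"
    then have cd': "c = b" "d = -a" using unit_orthogonal_pair_cases[OF e] by auto
    define v1 where "v1 = (1+a) *\<^sub>R n + b *\<^sub>R m"
    define v2 where "v2 = b *\<^sub>R n + (1-a) *\<^sub>R m"
    have "\<rho> v1 = ((1+a)*a + b*b) *\<^sub>R n + ((1+a)*b - b*a) *\<^sub>R m"
      "\<rho> v2 = (b*a + (1-a)*b) *\<^sub>R n + (b*b - (1-a)*a) *\<^sub>R m"
      unfolding v1_def v2_def linear_add[OF lin] linear_scale[OF lin] ab cd cd'
      by (simp_all add: algebra_simps)
    then have "\<rho> v1 = v1" "\<rho> v2 = v2" using e(1) by (simp_all add: v1_def v2_def algebra_simps)
    moreover have "v1 \<in> mperp ?P" "v2 \<in> mperp ?P"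
      using nQ subspace_mperp by (simp_all add: v1_def v2_def subspace_add subspace_scale)
    ultimately have "v1 = 0" "v2 = 0" using no_fixed by blast+
    then have "mink v1 n = 0" "mink v2 m = 0" by simp_all
    then show False using N nm by (simp add: v1_def v2_def mink_frame[OF nm(1,2), of _ _ 1 0, simplified]
          mink_frame[OF nm(1,2), of _ _ 0 1, simplified])
  qed
  have "a \<noteq> 1"
  proof
    assume "a = 1"
    then have "\<rho> n = n" using ab e(1) by simp
    then have "n = 0" using no_fixed nQ(1) by blast
    then show False using N by simp
  qed
  then show ?thesis using that ab cd proper e(1) by simp
qed

text \<open>Writing \<open>a = cos \<theta>\<close>, \<open>b = sin \<theta>\<close>, the normal \<open>b n + (1 - a) m\<close> is a positive
  multiple of \<open>n\<close> rotated by \<open>\<theta>/2\<close>, and reflecting in it is the rotation by \<open>\<theta>\<close>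
  after the reflection in \<open>n\<close>.\<close>

lemma mrefl_half_angle:
  assumes nm: "normal_pair n m" "mink m m = mink n n" and ab: "a*a + b*b = 1" "a \<noteq> 1"
  shows "mink (b *\<^sub>R n + (1-a) *\<^sub>R m) (b *\<^sub>R n + (1-a) *\<^sub>R m) > 0"
    "mrefl (b *\<^sub>R n + (1-a) *\<^sub>R m) n = (-a) *\<^sub>R n + (-b) *\<^sub>R m"
    "mrefl (b *\<^sub>R n + (1-a) *\<^sub>R m) m = (-b) *\<^sub>R n + a *\<^sub>R m"
proof -
  have den: "b*b + (1-a)*(1-a) = 2*(1-a)" using ab(1) by (simp add: algebra_simps)
  moreover have "1 - a > 0"
  proof -
    have "a^2 \<le> 1" using ab(1) by (simp add: power2_eq_square) (smt (verit) zero_le_square)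
    then show ?thesis using ab(2) by (simp add: abs_square_le_1 abs_le_iff)
  qed
  ultimately have den0: "b*b + (1-a)*(1-a) > 0" by simp
  then show "mink (b *\<^sub>R n + (1-a) *\<^sub>R m) (b *\<^sub>R n + (1-a) *\<^sub>R m) > 0"
    using nm by (simp add: mink_frame normal_pair_def)
  have coeffs: "1 - 2*(1*b+0*(1-a))*b/(b*b+(1-a)*(1-a)) = -a"
    "0 - 2*(1*b+0*(1-a))*(1-a)/(b*b+(1-a)*(1-a)) = -b"
    "0 - 2*(0*b+1*(1-a))*b/(b*b+(1-a)*(1-a)) = -b"
    "1 - 2*(0*b+1*(1-a))*(1-a)/(b*b+(1-a)*(1-a)) = a"
    unfolding den using ab by (simp_all add: field_simps)
  show "mrefl (b *\<^sub>R n + (1-a) *\<^sub>R m) n = (-a) *\<^sub>R n + (-b) *\<^sub>R m"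
    "mrefl (b *\<^sub>R n + (1-a) *\<^sub>R m) m = (-b) *\<^sub>R n + a *\<^sub>R m"
    using mrefl_frame[OF nm den0, of 1 0, unfolded coeffs] mrefl_frame[OF nm den0, of 0 1, unfolded coeffs]
    by simp_all
qed

lemma rotation_comp_mrefl:
  assumes iso: "mink_isom \<rho>" and P: "hplane (fixspace \<rho>)"
    and n: "n \<in> mperp (fixspace \<rho>)" "mink n n > 0"
  obtains n' where "n' \<in> mperp (fixspace \<rho>)" "mink n' n' > 0" "\<rho> \<circ> mrefl n = mrefl n'"
proof -
  let ?P = "fixspace \<rho>"
  have lin: "linear \<rho>" using iso by (simp add: mink_isom_def)
  have "n \<noteq> 0" using n by auto
  then obtain m where nm: "normal_pair n m" "mink m m = mink n n" "span {n, m} = mperp ?P"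
    using hplane_complete_normal_pair[OF P n(1)] by blast
  obtain a b where ab: "\<rho> n = a *\<^sub>R n + b *\<^sub>R m" "\<rho> m = (-b) *\<^sub>R n + a *\<^sub>R m"
    "a*a + b*b = 1" "a \<noteq> 1"
    using rotation_in_normal_frame[OF iso P nm] by blast
  define n' where "n' = b *\<^sub>R n + (1-a) *\<^sub>R m"
  note half = mrefl_half_angle[OF nm(1,2) ab(3,4), folded n'_def]
  have n'Q: "n' \<in> mperp ?P"
    using nm(3) by (metis n'_def span_add span_base span_scale insertCI)
  have "\<rho> \<circ> mrefl n = mrefl n'"
  proof (rule linear_eq_on_timelike_and_mperp[OF linear_compose[OF linear_mrefl lin] linear_mrefl])
    show "timelike_subspace ?P" using P by (simp add: hplane_def)
    show "(\<rho> \<circ> mrefl n) v = mrefl n' v" if v: "v \<in> ?P" for v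
    proof -
      have "mink v n = 0" "mink v n' = 0" using v n(1) n'Q by (auto simp: mperp_def mink_sym)
      then show ?thesis using v by (simp add: mrefl_fixes_mperp fixspace_def)
    qed
    have "\<rho> (mrefl n n) = (-a) *\<^sub>R n + (-b) *\<^sub>R m" "\<rho> (mrefl n m) = (-b) *\<^sub>R n + a *\<^sub>R m"
      using n nm ab(1,2) by (simp_all add: mrefl_self mrefl_fixes_mperp linear_neg[OF lin]
          normal_pair_def mink_sym[of m n])
    then have "(\<rho> \<circ> mrefl n) x = mrefl n' x" if "x \<in> {n, m}" for x using that half by auto
    then show "(\<rho> \<circ> mrefl n) v = mrefl n' v" if "v \<in> mperp ?P" for v
      using linear_eq_on_span[OF linear_compose[OF linear_mrefl lin] linear_mrefl] that nm(3) by blast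
  qed
  then show ?thesis using that n'Q half(1) by blast
qed

lemma mrefl_comp_rotation:
  assumes iso: "mink_isom \<rho>" and P: "hplane (fixspace \<rho>)"
    and n: "n \<in> mperp (fixspace \<rho>)" "mink n n > 0"
  obtains n' where "n' \<in> mperp (fixspace \<rho>)" "mink n' n' > 0" "mrefl n \<circ> \<rho> = mrefl n'"
proof -
  have "inv \<rho> n \<in> mperp (fixspace \<rho>)" using fixspace_preserves_mperp(2)[OF iso n(1)] .
  moreover have "mink (inv \<rho> n) (inv \<rho> n) > 0"
    using n(2) mink_isom_inv[OF iso] by (simp add: mink_isom_def)
  ultimately obtain n' where "n' \<in> mperp (fixspace \<rho>)" "mink n' n' > 0" "\<rho> \<circ> mrefl (inv \<rho> n) = mrefl n'"
    using rotation_comp_mrefl[OF iso P] by blast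
  then show ?thesis using that mrefl_comp_mink_isom[OF iso, of n] by metis
qed

section \<open>Elliptic isometries\<close>

lemma fixspace_elliptic_I:
  assumes "elliptic_I \<rho>"
  shows "mink_isom \<rho>" "hplane (fixspace \<rho>)" "subspace (fixspace \<rho>)"
  using assms
  by (auto simp: elliptic_I_def elliptic_def orient_isom_imp_mink_isom hplane_def timelike_subspace_def)

lemma mem_bank_elliptic_I:
  assumes "elliptic_I h" "normal_pair a b" "a \<in> mperp (fixspace h)" "b \<in> fixspace h"
  shows "mperp {a, b} \<in> bank h"
proof -
  have "\<exists>s t. hhyperplane s \<and> fixspace h \<subseteq> s \<and> hhyperplane t \<and> hyp_orth t (fixspace h)
      \<and> mperp {a, b} = s \<inter> t"
    using assms normal_pair_hhyperplanes[OF assms(2)] subset_mperp_singleton_iff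
      hyp_orth_mperp_singleton_iff[OF fixspace_elliptic_I(3)[OF assms(1)]] by blast
  then show ?thesis using assms normal_pair_hhyperplanes[OF assms(2)] by (simp add: bank_def)
qed

lemma mem_bank_elliptic_II:
  assumes "elliptic_II h" "h \<circ> h \<noteq> id" "elliptic_I \<rho>1" "elliptic_I \<rho>2" "h = \<rho>1 \<circ> \<rho>2" "h = \<rho>2 \<circ> \<rho>1"
    "fixspace \<rho>1 \<inter> fixspace \<rho>2 = fixspace h" "mperp (fixspace \<rho>1) \<subseteq> fixspace \<rho>2"
    and ab: "normal_pair a b" "a \<in> mperp (fixspace \<rho>1)" "b \<in> mperp (fixspace \<rho>2)"
  shows "mperp {a, b} \<in> bank h"
proof -
  have "\<exists>s t. hhyperplane s \<and> fixspace \<rho>1 \<subseteq> s \<and> hhyperplane t \<and> fixspace \<rho>2 \<subseteq> t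
      \<and> mperp {a, b} = s \<inter> t"
    using ab normal_pair_hhyperplanes[OF ab(1)] subset_mperp_singleton_iff by blast
  then show ?thesis using assms normal_pair_hhyperplanes[OF ab(1)] unfolding bank_def by blast
qed

lemma halfturn_factorisation_elliptic_I:
  assumes \<gamma>: "elliptic_I \<gamma>" and s: "hhyperplane s" "fixspace \<gamma> \<subseteq> s"
    and t: "hhyperplane t" "hyp_orth t (fixspace \<gamma>)"
  shows "\<exists>k1\<in>bank \<gamma>. \<exists>k2\<in>bank \<gamma>.
    \<gamma> = halfturn k1 \<circ> halfturn (s \<inter> t) \<and> \<gamma> = halfturn (s \<inter> t) \<circ> halfturn k2"
proof -
  let ?P = "fixspace \<gamma>"
  note P = fixspace_elliptic_I[OF \<gamma>]
  obtain ns where ns: "mink ns ns > 0" "s = mperp {ns}" using hhyperplane_normal[OF s(1)] by blast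
  obtain nt where nt: "mink nt nt > 0" "t = mperp {nt}" using hhyperplane_normal[OF t(1)] by blast
  have nsP: "ns \<in> mperp ?P" using s(2) ns(2) subset_mperp_singleton_iff by blast
  have ntP: "nt \<in> ?P" using t(2) nt(2) hyp_orth_mperp_singleton_iff[OF P(3)] by blast
  have k: "normal_pair ns nt" "s \<inter> t = mperp {ns, nt}"
    using ns nt nsP ntP by (auto simp: normal_pair_def mperp_def mperp_pair)
  have comm: "\<gamma> \<circ> mrefl nt = mrefl nt \<circ> \<gamma>"
    using mink_isom_commutes_mrefl[OF P(1)] ntP by (simp add: fixspace_def)
  obtain n1 where n1: "n1 \<in> mperp ?P" "mink n1 n1 > 0" "\<gamma> \<circ> mrefl ns = mrefl n1"
    using rotation_comp_mrefl[OF P(1,2) nsP ns(1)] by blast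
  obtain n2 where n2: "n2 \<in> mperp ?P" "mink n2 n2 > 0" "mrefl ns \<circ> \<gamma> = mrefl n2"
    using mrefl_comp_rotation[OF P(1,2) nsP ns(1)] by blast
  have pairs: "normal_pair n1 nt" "normal_pair n2 nt"
    using n1 n2 ntP nt(1) by (auto simp: normal_pair_def mperp_def)
  have "\<gamma> = halfturn (mperp {n1, nt}) \<circ> halfturn (s \<inter> t)"
    using halfturn_factor_left[OF k(1) pairs(1), of \<gamma> \<gamma> id] n1(3) k(2) by simp
  moreover have "\<gamma> = halfturn (s \<inter> t) \<circ> halfturn (mperp {n2, nt})"
    using halfturn_factor_right[OF k(1) pairs(2), of \<gamma> \<gamma> id] n2(3) comm k(2) by simp
  moreover have "mperp {n1, nt} \<in> bank \<gamma>" "mperp {n2, nt} \<in> bank \<gamma>"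
    using mem_bank_elliptic_I[OF \<gamma>] pairs n1(1) n2(1) ntP by auto
  ultimately show ?thesis by blast
qed

lemma halfturn_factorisation_elliptic_II:
  assumes \<gamma>: "elliptic_II \<gamma>" "\<gamma> \<circ> \<gamma> \<noteq> id"
    and \<rho>: "elliptic_I \<rho>1" "elliptic_I \<rho>2" "\<gamma> = \<rho>1 \<circ> \<rho>2" "\<gamma> = \<rho>2 \<circ> \<rho>1"
      "fixspace \<rho>1 \<inter> fixspace \<rho>2 = fixspace \<gamma>" "mperp (fixspace \<rho>1) \<subseteq> fixspace \<rho>2"
    and s: "hhyperplane s" "fixspace \<rho>1 \<subseteq> s" and t: "hhyperplane t" "fixspace \<rho>2 \<subseteq> t"
  shows "\<exists>k1\<in>bank \<gamma>. \<exists>k2\<in>bank \<gamma>.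
    \<gamma> = halfturn k1 \<circ> halfturn (s \<inter> t) \<and> \<gamma> = halfturn (s \<inter> t) \<circ> halfturn k2"
proof -
  let ?P1 = "fixspace \<rho>1" and ?P2 = "fixspace \<rho>2"
  note P1 = fixspace_elliptic_I[OF \<rho>(1)] and P2 = fixspace_elliptic_I[OF \<rho>(2)]
  have perp21: "mperp ?P2 \<subseteq> ?P1" using mperp_antimono[OF \<rho>(6)] mperp_mperp[OF P1(3)] by simp
  obtain ns where ns: "mink ns ns > 0" "s = mperp {ns}" using hhyperplane_normal[OF s(1)] by blast
  obtain nt where nt: "mink nt nt > 0" "t = mperp {nt}" using hhyperplane_normal[OF t(1)] by blast
  have nsP: "ns \<in> mperp ?P1" using s(2) ns(2) subset_mperp_singleton_iff by blast
  have ntP: "nt \<in> mperp ?P2" using t(2) nt(2) subset_mperp_singleton_iff by blast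
  have "ns \<in> ?P2" using nsP \<rho>(6) by blast
  then have k: "normal_pair ns nt" "s \<inter> t = mperp {ns, nt}"
    using ns nt ntP by (auto simp: normal_pair_def mperp_def mink_sym mperp_pair)
  have comm: "\<rho>2 \<circ> mrefl ns = mrefl ns \<circ> \<rho>2" "\<rho>1 \<circ> mrefl nt = mrefl nt \<circ> \<rho>1"
    using mink_isom_commutes_mrefl[OF P2(1)] mink_isom_commutes_mrefl[OF P1(1)] nsP ntP \<rho>(6) perp21
    by (auto simp: fixspace_def)
  obtain a1 where a1: "a1 \<in> mperp ?P1" "mink a1 a1 > 0" "\<rho>1 \<circ> mrefl ns = mrefl a1"
    using rotation_comp_mrefl[OF P1(1,2) nsP ns(1)] by blast
  obtain b1 where b1: "b1 \<in> mperp ?P2" "mink b1 b1 > 0" "\<rho>2 \<circ> mrefl nt = mrefl b1"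
    using rotation_comp_mrefl[OF P2(1,2) ntP nt(1)] by blast
  obtain a2 where a2: "a2 \<in> mperp ?P1" "mink a2 a2 > 0" "mrefl ns \<circ> \<rho>1 = mrefl a2"
    using mrefl_comp_rotation[OF P1(1,2) nsP ns(1)] by blast
  obtain b2 where b2: "b2 \<in> mperp ?P2" "mink b2 b2 > 0" "mrefl nt \<circ> \<rho>2 = mrefl b2"
    using mrefl_comp_rotation[OF P2(1,2) ntP nt(1)] by blast
  have "a1 \<in> ?P2" "a2 \<in> ?P2" using a1(1) a2(1) \<rho>(6) by blast+
  then have pairs: "normal_pair a1 b1" "normal_pair a2 b2"
    using a1 b1 a2 b2 by (auto simp: normal_pair_def mperp_def mink_sym)
  have "\<gamma> = halfturn (mperp {a1, b1}) \<circ> halfturn (s \<inter> t)"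
    using halfturn_factor_left[OF k(1) pairs(1) \<rho>(3) comm(1) a1(3) b1(3)] k(2) by simp
  moreover have "\<gamma> = halfturn (s \<inter> t) \<circ> halfturn (mperp {a2, b2})"
    using halfturn_factor_right[OF k(1) pairs(2) \<rho>(3) comm(2) a2(3) b2(3)] k(2) by simp
  moreover have "mperp {a1, b1} \<in> bank \<gamma>" "mperp {a2, b2} \<in> bank \<gamma>"
    using mem_bank_elliptic_II[OF \<gamma> \<rho>] pairs a1(1) b1(1) a2(1) b2(1) by auto
  ultimately show ?thesis by blast
qed

lemma mrefl_uminus: "mrefl (- n) = mrefl n"
  by (simp add: fun_eq_iff mrefl_def mink_simps)

lemma subspace_fixspace: "linear f \<Longrightarrow> subspace (fixspace f)"
  by (auto simp: subspace_def fixspace_def linear_add linear_scale linear_0)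

text \<open>A type-II elliptic involution is the point reflection in its fixed point \<open>x\<close>:
  \<open>v + \<gamma> v\<close> is fixed, hence a multiple of \<open>x\<close>, and orthogonal to \<open>x\<close> when \<open>v\<close> is.\<close>

lemma point_reflection_elliptic_II:
  assumes \<gamma>: "elliptic_II \<gamma>" "\<gamma> \<circ> \<gamma> = id"
  obtains x where "mink x x < 0" "fixspace \<gamma> = span {x}" "\<And>v. mink v x = 0 \<Longrightarrow> \<gamma> v = - v"
proof -
  have iso: "mink_isom \<gamma>" using \<gamma> by (auto simp: elliptic_II_def elliptic_def orient_isom_imp_mink_isom)
  have lin: "linear \<gamma>" and mi: "\<And>x y. mink (\<gamma> x) (\<gamma> y) = mink x y" using iso by (auto simp: mink_isom_def)
  have X: "hpoint (fixspace \<gamma>)" using \<gamma> by (simp add: elliptic_II_def)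
  then obtain x where x: "x \<in> fixspace \<gamma>" "mink x x < 0" by (auto simp: hpoint_def timelike_subspace_def)
  have "x \<noteq> 0" using x(2) by auto
  then have spX: "span {x} = fixspace \<gamma>"
    using span_singleton_eq_if_dim_1 X x(1) by (simp add: hpoint_def timelike_subspace_def)
  have "\<gamma> v = - v" if vx: "mink v x = 0" for v
  proof -
    have "\<gamma> (v + \<gamma> v) = v + \<gamma> v" using lin \<gamma>(2) by (simp add: linear_add pointfree_idE)
    then obtain c where c: "v + \<gamma> v = c *\<^sub>R x" using spX by (auto simp: fixspace_def span_singleton)
    have "mink (\<gamma> v) x = 0" using mi[of v x] x(1) vx by (simp add: fixspace_def)
    then have "c * mink x x = 0" using vx c mink_add_left[of v "\<gamma> v" x] by (simp add: mink_simps)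
    then have "v + \<gamma> v = 0" using x(2) c by simp
    then show ?thesis by (simp add: eq_neg_iff_add_eq_0 add.commute)
  qed
  then show ?thesis using that x(2) spX by blast
qed

lemma hplane_span_timelike_normal_pair:
  assumes x: "mink x x < 0" and n: "normal_pair n1 n2" and xn: "mink n1 x = 0" "mink n2 x = 0"
  shows "hplane (span {x, n1, n2})"
proof -
  have "x \<notin> span {n1, n2}"
  proof
    assume "x \<in> span {n1, n2}"
    then obtain a b where "x = a *\<^sub>R n1 + b *\<^sub>R n2" by (auto simp: span_pair_iff)
    then have "mink x x = mink (a *\<^sub>R n1 + b *\<^sub>R n2) x" by (rule arg_cong)
    then have "mink x x = 0" using xn by (simp add: mink_simps)
    then show False using x by simp
  qed
  then have "independent {x, n1, n2}"
    using normal_pair_independent[OF n] x n by (auto simp: normal_pair_def independent_insert)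
  moreover have "x \<noteq> n1" "x \<noteq> n2" using x n by (auto simp: normal_pair_def)
  then have "card {x, n1, n2} = 3" using normal_pair_independent(2)[OF n] by simp
  ultimately show ?thesis
    using x by (auto simp: hplane_def timelike_subspace_def dim_eq_card_independent intro: span_base)
qed

lemma halfturn_factorisation_point_reflection:
  assumes \<gamma>: "elliptic_II \<gamma>" "\<gamma> \<circ> \<gamma> = id" and k: "hplane k" "fixspace \<gamma> \<subseteq> k"
  shows "\<exists>k1\<in>bank \<gamma>. \<exists>k2\<in>bank \<gamma>. \<gamma> = halfturn k1 \<circ> halfturn k \<and> \<gamma> = halfturn k \<circ> halfturn k2"
proof -
  have iso: "mink_isom \<gamma>" using \<gamma> by (auto simp: elliptic_II_def elliptic_def orient_isom_imp_mink_isom)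
  have lin: "linear \<gamma>" using iso by (simp add: mink_isom_def)
  obtain x where x: "mink x x < 0" "fixspace \<gamma> = span {x}" and neg: "\<And>v. mink v x = 0 \<Longrightarrow> \<gamma> v = - v"
    using point_reflection_elliptic_II[OF \<gamma>] by blast
  obtain n1 n2 where n: "normal_pair n1 n2" "k = mperp {n1, n2}"
    using hplane_normal_pair[OF k(1)] by blast
  have "x \<in> k" using x(2) k(2) span_base[of x "{x}"] by blast
  then have xn: "mink n1 x = 0" "mink n2 x = 0" using n(2) by (auto simp: mperp_def mink_sym)
  then have \<gamma>n: "\<gamma> n1 = - n1" "\<gamma> n2 = - n2" using neg by auto
  have hk: "halfturn k = mrefl n1 \<circ> mrefl n2" using halfturn_mperp_normal_pair[OF n(1)] n(2) by simp
  have comm: "\<gamma> \<circ> halfturn k = halfturn k \<circ> \<gamma>"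
    using mink_isom_mrefl_conj[OF iso] \<gamma>n by (simp add: hk fun_eq_iff mrefl_uminus)
  let ?W = "span {x, n1, n2}"
  have W: "hplane ?W" using hplane_span_timelike_normal_pair[OF x(1) n(1) xn] .
  have lk: "linear (\<gamma> \<circ> halfturn k)" by (simp add: hk linear_compose linear_mrefl lin)
  have "halfturn ?W = \<gamma> \<circ> halfturn k"
  proof (rule halfturn_unique[OF W lk])
    have "mrefl n1 n2 = n2" "mrefl n2 n1 = n1" "mrefl n1 n1 = - n1" "mrefl n2 n2 = - n2"
      "mrefl n1 x = x" "mrefl n2 x = x"
      using n(1) xn by (auto simp: mrefl_fixes_mperp mrefl_self normal_pair_def mink_sym)
    then have "{x, n1, n2} \<subseteq> fixspace (\<gamma> \<circ> halfturn k)"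
      using \<gamma>n x(2) lin by (auto simp: hk fixspace_def linear_neg linear_mrefl intro: span_base)
    then have "?W \<subseteq> fixspace (\<gamma> \<circ> halfturn k)"
      by (rule span_minimal) (rule subspace_fixspace[OF lk])
    then show "\<forall>v\<in>?W. (\<gamma> \<circ> halfturn k) v = v" by (auto simp: fixspace_def)
    show "\<forall>v\<in>mperp ?W. (\<gamma> \<circ> halfturn k) v = - v"
      unfolding mperp_span by (auto simp: mperp_def hk mrefl_fixes_mperp neg)
  qed
  then have "\<gamma> = halfturn ?W \<circ> halfturn k" "\<gamma> = halfturn k \<circ> halfturn ?W"
    using halfturn_halfturn[OF k(1)] comm by (metis comp_assoc comp_id)+
  moreover have "?W \<in> bank \<gamma>" using W \<gamma> x(2) by (auto simp: bank_def span_mono)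
  ultimately show ?thesis by blast
qed

section \<open>Loxodromic isometries\<close>

lemma cauchy_schwarz_4:
  fixes a1 a2 a3 a4 b1 b2 b3 b4 :: real
  shows "(a1*b1+a2*b2+a3*b3+a4*b4)^2 \<le> (a1^2+a2^2+a3^2+a4^2)*(b1^2+b2^2+b3^2+b4^2)"
proof -
  have "(a1^2+a2^2+a3^2+a4^2)*(b1^2+b2^2+b3^2+b4^2) - (a1*b1+a2*b2+a3*b3+a4*b4)^2
     = (a1*b2-a2*b1)^2 + (a1*b3-a3*b1)^2 + (a1*b4-a4*b1)^2 + (a2*b3-a3*b2)^2
       + (a2*b4-a4*b2)^2 + (a3*b4-a4*b3)^2"
    by (simp add: power2_eq_square algebra_simps)
  moreover have "(a1*b2-a2*b1)^2 + (a1*b3-a3*b1)^2 + (a1*b4-a4*b1)^2 + (a2*b3-a3*b2)^2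
       + (a2*b4-a4*b2)^2 + (a3*b4-a4*b3)^2 \<ge> 0" by simp
  ultimately show ?thesis by linarith
qed

lemma null_pair_same_time_sign:
  assumes u: "mink u u = 0" and w: "mink w w = 0" and uw: "mink u w < 0"
  shows "u$0 * w$0 > 0"
proof (rule ccontr)
  assume "\<not> u$0 * w$0 > 0"
  define s where "s = u$1*w$1 + u$2*w$2 + u$3*w$3 + u$4*w$4"
  have "s < u$0 * w$0" using uw by (simp add: mink_def s_def)
  with \<open>\<not> u$0 * w$0 > 0\<close> have "(- (u$0 * w$0))^2 < (- s)^2"
    by (intro power_strict_mono) auto
  then have "(u$0 * w$0)^2 < s^2" by simp
  moreover have "s^2 \<le> ((u$1)^2 + (u$2)^2 + (u$3)^2 + (u$4)^2) * ((w$1)^2 + (w$2)^2 + (w$3)^2 + (w$4)^2)"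
    unfolding s_def by (rule cauchy_schwarz_4)
  moreover have "(u$1)^2 + (u$2)^2 + (u$3)^2 + (u$4)^2 = (u$0)^2"
    "(w$1)^2 + (w$2)^2 + (w$3)^2 + (w$4)^2 = (w$0)^2"
    using u w by (simp_all add: mink_def power2_eq_square)
  ultimately show False by (simp add: power_mult_distrib)
qed

lemma orient_isom_time_sign:
  assumes g: "orient_isom g" and y: "mink y y < 0"
  shows "(g y)$0 * y$0 > 0"
proof -
  have tp: "\<And>v. mink v v < 0 \<Longrightarrow> v$0 > 0 \<Longrightarrow> (g v)$0 > 0" using g by (auto simp: orient_isom_def)
  have lin: "linear g" using g by (simp add: orient_isom_def)
  show ?thesis
  proof (cases "y$0 > 0")
    case True then show ?thesis using tp[OF y] by simp
  next
    case False
    then have "(- y)$0 > 0" using time_nonzero_if_timelike[OF y] by simp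
    moreover have "mink (-y) (-y) < 0" using y by (simp add: mink_simps)
    ultimately have "(g y)$0 < 0" using tp linear_neg[OF lin] by fastforce
    moreover have "y$0 < 0" using False time_nonzero_if_timelike[OF y] by linarith
    ultimately show ?thesis by (simp add: mult_neg_neg)
  qed
qed

lemma pos_square_eq_1: "(c::real) > 0 \<Longrightarrow> c * c = 1 \<Longrightarrow> c = 1"
proof -
  assume "c > 0" "c * c = 1"
  then have "(c - 1) * (c + 1) = 0" by (simp add: algebra_simps)
  then show "c = 1" using \<open>c > 0\<close> by auto
qed

text \<open>The null vectors \<open>u, w\<close> represent two boundary points fixed by \<open>\<tau>\<close>, which
  scales them by \<open>c\<close> and \<open>1/c\<close>: \<open>\<tau>\<close> translates the line between them by \<open>ln c\<close>.\<close>

definition null_eigenframe :: "(real^5 \<Rightarrow> real^5) \<Rightarrow> real^5 \<Rightarrow> real^5 \<Rightarrow> real \<Rightarrow> bool" where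
  "null_eigenframe \<tau> u w c \<longleftrightarrow> mink u u = 0 \<and> mink w w = 0 \<and> mink u w \<noteq> 0 \<and> c > 0 \<and>
     \<tau> u = c *\<^sub>R u \<and> \<tau> w = (1/c) *\<^sub>R w"

lemma null_eigenframe_swap: "null_eigenframe \<tau> u w c \<Longrightarrow> null_eigenframe \<tau> w u (1/c)"
  by (auto simp: null_eigenframe_def mink_sym)

lemma null_eigenframe_null_eigenvector:
  assumes iso: "mink_isom \<tau>" and F: "null_eigenframe \<tau> u w c" "c \<noteq> 1"
    and v: "mink v v = 0" "\<tau> v = e *\<^sub>R v"
  shows "v \<in> span {u} \<or> v \<in> span {w}"
proof -
  have mi: "\<And>x y. mink (\<tau> x) (\<tau> y) = mink x y" using iso by (auto simp: mink_isom_def)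
  have u: "mink u u = 0" and w: "mink w w = 0" and K: "mink u w \<noteq> 0" and c: "c > 0"
    and tu: "\<tau> u = c *\<^sub>R u" and tw: "\<tau> w = (1/c) *\<^sub>R w"
    using F by (auto simp: null_eigenframe_def)
  define k where "k = mink u w"
  have wu: "mink w u = k" by (simp add: k_def mink_sym)
  define \<alpha> where "\<alpha> = mink v w / k"
  define \<beta> where "\<beta> = mink v u / k"
  define z where "z = v - \<alpha> *\<^sub>R u - \<beta> *\<^sub>R w"
  have zuw: "mink z u = 0" "mink z w = 0" "mink u z = 0" "mink w z = 0"
    using K by (simp_all add: z_def \<alpha>_def \<beta>_def mink_simps u w wu k_def[symmetric] mink_sym[of _ v])
  have "mink (\<tau> v) (\<tau> u) = (e * c) * mink v u" "mink (\<tau> v) (\<tau> w) = (e / c) * mink v w"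
    by (simp_all add: v(2) tu tw mink_simps)
  then have "mink v u = (e * c) * mink v u" "mink v w = (e / c) * mink v w" by (simp_all only: mi)
  then have "mink v u * (e * c - 1) = 0" "mink v w * (e / c - 1) = 0" by (simp_all add: algebra_simps)
  then have "mink v u = 0 \<or> e * c = 1" "mink v w = 0 \<or> e = c" using c by auto
  then have "\<beta> = 0 \<or> e * c = 1" "\<alpha> = 0 \<or> e = c" by (auto simp: \<alpha>_def \<beta>_def)
  moreover have "\<not> (e * c = 1 \<and> e = c)" using pos_square_eq_1 c F(2) by blast
  ultimately have "\<alpha> = 0 \<or> \<beta> = 0" by blast
  moreover have "mink v v = 2 * \<alpha> * \<beta> * k + mink z z"
  proof -
    have "v = \<alpha> *\<^sub>R u + \<beta> *\<^sub>R w + z" by (simp add: z_def)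
    then have "mink v v = mink (\<alpha> *\<^sub>R u + \<beta> *\<^sub>R w + z) (\<alpha> *\<^sub>R u + \<beta> *\<^sub>R w + z)" by simp
    then show ?thesis
      using zuw by (simp add: mink_simps u w wu k_def[symmetric] algebra_simps)
  qed
  ultimately have "mink z z = 0" using v(1) by auto
  moreover have "mink (u - k *\<^sub>R w) z = 0" using zuw by (simp add: mink_simps)
  moreover have "mink (u - k *\<^sub>R w) (u - k *\<^sub>R w) < 0"
    using timelike_combination_of_null[OF u w K] by (simp add: k_def)
  ultimately have "z = 0" using spacelike_if_orthogonal_timelike by (metis less_irrefl)
  then show ?thesis using \<open>\<alpha> = 0 \<or> \<beta> = 0\<close> by (auto simp: z_def span_singleton)
qed

lemma null_eigenframe_eigenvector:
  assumes iso: "mink_isom \<tau>" and F: "null_eigenframe \<tau> u w c" "c \<noteq> 1"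
    and v: "mink v v = 0" "\<tau> v = c *\<^sub>R v"
  shows "v \<in> span {u}"
proof -
  have lin: "linear \<tau>" using iso by (simp add: mink_isom_def)
  have c: "c > 0" and tw: "\<tau> w = (1/c) *\<^sub>R w" using F by (auto simp: null_eigenframe_def)
  have zero: "v = 0" if "v = b *\<^sub>R w" for b
  proof -
    have "(c * b) *\<^sub>R w = \<tau> v" using v(2) that by simp
    also have "\<dots> = (b / c) *\<^sub>R w" using that tw by (simp add: linear_scale[OF lin])
    finally have "(c * b) *\<^sub>R w = (b / c) *\<^sub>R w" .
    moreover have "w \<noteq> 0" using F by (auto simp: null_eigenframe_def)
    ultimately have "c * b = b / c" by (metis scaleR_cancel_right)
    then have "b * (c * c - 1) = 0" using c by (simp add: field_simps)
    then show ?thesis using that pos_square_eq_1[OF c] F(2) by auto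
  qed
  consider "v \<in> span {u}" | "v \<in> span {w}" using null_eigenframe_null_eigenvector[OF iso F v] by blast
  then show ?thesis
  proof cases
    case 2
    then obtain b where "v = b *\<^sub>R w" by (auto simp: span_singleton)
    then have "v = 0" by (rule zero)
    then show ?thesis by (simp add: span_zero)
  qed
qed

text \<open>Positivity of the eigenvalues comes from time orientation: with \<open>w'\<close> the multiple of
  \<open>w\<close> in the same half of the light cone as \<open>u\<close>, the timelike vector \<open>u + w'\<close> would change
  the sign of its time coordinate if both eigenvalues were negative.\<close>

lemma null_eigenvalue_pos:
  assumes g: "orient_isom \<tau>" and u: "mink u u = 0" and w: "mink w w = 0" and K: "mink u w \<noteq> 0"
    and tu: "\<tau> u = c *\<^sub>R u" and tw: "\<tau> w = d *\<^sub>R w" and cd: "c * d = 1"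
  shows "c > 0"
proof (rule ccontr)
  assume "\<not> c > 0"
  then have "c < 0" using cd by (cases "c = 0") auto
  moreover have "d < 0"
  proof (rule ccontr)
    assume "\<not> d < 0"
    then have "c * d \<le> 0" using \<open>c < 0\<close> by (simp add: mult_nonpos_nonneg)
    then show False using cd by simp
  qed
  ultimately have neg: "c < 0" "d < 0" by blast+
  have lin: "linear \<tau>" using g by (simp add: orient_isom_def)
  define w' where "w' = (- mink u w) *\<^sub>R w"
  have kk: "mink u w * mink u w > 0" using K by (metis not_real_square_gt_zero)
  have uw': "mink u w' < 0" "mink w' w' = 0" "mink w' u = mink u w'"
    using kk by (simp_all add: w'_def mink_simps w mink_sym)
  have same: "u$0 * w'$0 > 0" by (rule null_pair_same_time_sign[OF u uw'(2,1)])
  have y: "mink (u + w') (u + w') < 0" using uw' by (simp add: mink_simps u)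
  have "\<tau> w' = d *\<^sub>R w'" using lin by (simp add: w'_def linear_scale linear_neg tw)
  then have "\<tau> (u + w') = c *\<^sub>R u + d *\<^sub>R w'" by (simp add: linear_add[OF lin] tu)
  then have "(\<tau> (u + w'))$0 * (u + w')$0
      = c * (u$0 * u$0) + (c + d) * (u$0 * w'$0) + d * (w'$0 * w'$0)"
    by (simp add: algebra_simps)
  moreover have "c * (u$0 * u$0) \<le> 0" "(c + d) * (u$0 * w'$0) < 0" "d * (w'$0 * w'$0) \<le> 0"
    using neg same by (simp_all add: mult_nonpos_nonneg mult_neg_pos)
  ultimately show False using orient_isom_time_sign[OF g y] by linarith
qed

lemma loxodromic_null_eigenframe:
  assumes lox: "loxodromic \<tau>"
  obtains u w c where "null_eigenframe \<tau> u w c" "c \<noteq> 1"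
proof -
  have g: "orient_isom \<tau>" and ne: "\<not> elliptic \<tau>" using lox by (auto simp: loxodromic_def)
  have mi: "\<And>x y. mink (\<tau> x) (\<tau> y) = mink x y" using g by (simp add: orient_isom_def)
  obtain u w where uf: "u \<in> fixed_bdry \<tau>" and wf: "w \<in> fixed_bdry \<tau>" and np: "\<not> (\<exists>c. w = c *\<^sub>R u)"
    using lox by (auto simp: loxodromic_def)
  obtain c where u: "u \<noteq> 0" "mink u u = 0" "\<tau> u = c *\<^sub>R u" using uf by (auto simp: fixed_bdry_def)
  obtain d where w: "mink w w = 0" "\<tau> w = d *\<^sub>R w" using wf by (auto simp: fixed_bdry_def)
  have K: "mink u w \<noteq> 0" using collinear_if_orthogonal_null[OF u(2,1) w(1)] np by blast
  have "mink (\<tau> u) (\<tau> w) = (c * d) * mink u w" by (simp add: u(3) w(2) mink_simps)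
  then have "mink u w * (c * d - 1) = 0" by (simp only: mi) (simp add: algebra_simps)
  then have cd: "c * d = 1" using K by simp
  have c: "c > 0" by (rule null_eigenvalue_pos[OF g u(2) w(1) K u(3) w(2) cd])
  then have d: "d = 1 / c" using cd by (simp add: field_simps)
  have "c \<noteq> 1"
  proof
    assume "c = 1"
    then have "\<tau> (u - mink u w *\<^sub>R w) = u - mink u w *\<^sub>R w"
      using g d by (simp add: orient_isom_def linear_diff linear_scale u(3) w(2))
    then show False using ne g timelike_combination_of_null[OF u(2) w(1) K] by (auto simp: elliptic_def)
  qed
  moreover have "null_eigenframe \<tau> u w c" using u w K c d by (simp add: null_eigenframe_def)
  ultimately show ?thesis using that by blast
qed

lemma loxodromic_axis:
  assumes lox: "loxodromic \<tau>" and F: "null_eigenframe \<tau> u w c" "c \<noteq> 1"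
  shows "axis \<tau> = span {u, w}"
proof -
  have iso: "mink_isom \<tau>" using lox by (simp add: loxodromic_def orient_isom_imp_mink_isom)
  have "fixed_bdry \<tau> \<subseteq> span {u, w}"
  proof
    fix v assume "v \<in> fixed_bdry \<tau>"
    then obtain e where "mink v v = 0" "\<tau> v = e *\<^sub>R v" by (auto simp: fixed_bdry_def)
    then have "v \<in> span {u} \<or> v \<in> span {w}" by (rule null_eigenframe_null_eigenvector[OF iso F])
    then show "v \<in> span {u, w}" using span_mono[of "{u}" "{u, w}"] span_mono[of "{w}" "{u, w}"] by blast
  qed
  moreover have "{u, w} \<subseteq> fixed_bdry \<tau>"
    using F by (auto simp: null_eigenframe_def fixed_bdry_def)
  ultimately show ?thesis
    unfolding axis_def by (metis span_mono span_minimal subspace_span subset_antisym)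
qed

lemma mrefl_null_frame:
  assumes "mink u u = 0" "mink w w = 0" "mink u w \<noteq> 0" "\<alpha> \<noteq> 0" "\<beta> \<noteq> 0"
  shows "mrefl (\<alpha> *\<^sub>R u + \<beta> *\<^sub>R w) u = (- (\<beta>/\<alpha>)) *\<^sub>R w"
    "mrefl (\<alpha> *\<^sub>R u + \<beta> *\<^sub>R w) w = (- (\<alpha>/\<beta>)) *\<^sub>R u"
proof -
  have nn: "mink (\<alpha> *\<^sub>R u + \<beta> *\<^sub>R w) (\<alpha> *\<^sub>R u + \<beta> *\<^sub>R w) = 2 * \<alpha> * \<beta> * mink u w"
    using assms by (simp add: mink_simps mink_sym[of w u] algebra_simps)
  show "mrefl (\<alpha> *\<^sub>R u + \<beta> *\<^sub>R w) u = (- (\<beta>/\<alpha>)) *\<^sub>R w"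
    "mrefl (\<alpha> *\<^sub>R u + \<beta> *\<^sub>R w) w = (- (\<alpha>/\<beta>)) *\<^sub>R u"
    unfolding mrefl_def nn using assms
    by (simp_all add: mink_simps mink_sym[of w u] vec_eq_iff field_simps)
qed

text \<open>Composing the reflection in a normal \<open>n = \<alpha> u + \<beta> w\<close> of the axis with the boost
  rescales \<open>\<alpha>\<close> by \<open>c\<close>.\<close>

lemma boost_comp_mrefl:
  assumes lin: "linear \<tau>" and F: "null_eigenframe \<tau> u w c" and perp: "\<forall>v\<in>mperp {u, w}. \<tau> v = v"
    and n: "n \<in> span {u, w}" "mink n n > 0"
  obtains n' where "n' \<in> span {u, w}" "mink n' n' > 0" "\<tau> \<circ> mrefl n = mrefl n'"
proof -
  have u: "mink u u = 0" and w: "mink w w = 0" and K: "mink u w \<noteq> 0" and c: "c > 0"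
    and tu: "\<tau> u = c *\<^sub>R u" and tw: "\<tau> w = (1/c) *\<^sub>R w"
    using F by (auto simp: null_eigenframe_def)
  obtain \<alpha> \<beta> where n_eq: "n = \<alpha> *\<^sub>R u + \<beta> *\<^sub>R w" using n(1) by (auto simp: span_pair_iff)
  have nn: "mink (x *\<^sub>R u + y *\<^sub>R w) (x *\<^sub>R u + y *\<^sub>R w) = 2 * x * y * mink u w" for x y
    using u w by (simp add: mink_simps mink_sym[of w u] algebra_simps)
  have ab: "\<alpha> \<noteq> 0" "\<beta> \<noteq> 0" "\<alpha> * c \<noteq> 0" using n(2) c by (auto simp: n_eq nn)
  define n' where "n' = (\<alpha> * c) *\<^sub>R u + \<beta> *\<^sub>R w"
  have "mink n' n' = c * mink n n" unfolding n'_def n_eq nn by (simp add: algebra_simps)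
  then have n': "n' \<in> span {u, w}" "mink n' n' > 0"
    using n(2) c by (auto simp: n'_def span_pair_iff)
  have "\<tau> \<circ> mrefl n = mrefl n'"
  proof (rule linear_eq_on_timelike_and_mperp[OF linear_compose[OF linear_mrefl lin] linear_mrefl])
    show "timelike_subspace (span {u, w})"
      using timelike_combination_of_null[OF u w K]
      by (auto simp: timelike_subspace_def span_pair_iff intro!: bexI[of _ "u - mink u w *\<^sub>R w"])
        (metis scaleR_one diff_conv_add_uminus scaleR_minus_left)
    have "(\<tau> \<circ> mrefl n) x = mrefl n' x" if "x \<in> {u, w}" for x
      using that mrefl_null_frame[OF u w K ab(1,2)] mrefl_null_frame[OF u w K ab(3,2)] ab c
      by (auto simp: n_eq n'_def linear_scale[OF lin] linear_neg[OF lin] tu tw)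
    then show "(\<tau> \<circ> mrefl n) v = mrefl n' v" if "v \<in> span {u, w}" for v
      using linear_eq_on_span[OF linear_compose[OF linear_mrefl lin] linear_mrefl] that by blast
    show "(\<tau> \<circ> mrefl n) v = mrefl n' v" if "v \<in> mperp (span {u, w})" for v
    proof -
      have "mink v u = 0" "mink v w = 0" using that unfolding mperp_span by (auto simp: mperp_def)
      then show ?thesis
        using perp that by (simp add: n_eq n'_def mink_simps mrefl_fixes_mperp mperp_span)
    qed
  qed
  then show ?thesis using that n' by blast
qed

lemma mrefl_comp_boost:
  assumes iso: "mink_isom \<tau>" and F: "null_eigenframe \<tau> u w c" and perp: "\<forall>v\<in>mperp {u, w}. \<tau> v = v"
    and n: "n \<in> span {u, w}" "mink n n > 0"
  obtains n' where "n' \<in> span {u, w}" "mink n' n' > 0" "mrefl n \<circ> \<tau> = mrefl n'"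
proof -
  have lin: "linear \<tau>" using iso by (simp add: mink_isom_def)
  have c: "c > 0" and tu: "\<tau> u = c *\<^sub>R u" and tw: "\<tau> w = (1/c) *\<^sub>R w"
    using F by (auto simp: null_eigenframe_def)
  obtain \<alpha> \<beta> where n_eq: "n = \<alpha> *\<^sub>R u + \<beta> *\<^sub>R w" using n(1) by (auto simp: span_pair_iff)
  define m where "m = (\<alpha> / c) *\<^sub>R u + (\<beta> * c) *\<^sub>R w"
  have "\<tau> m = n" using lin c by (simp add: m_def n_eq linear_add linear_scale tu tw)
  then have m_eq: "m = inv \<tau> n" using mink_isom_inv_f_f[OF iso] by metis
  have "m \<in> span {u, w}" by (auto simp: m_def span_pair_iff)
  moreover have "mink m m > 0" using n(2) mink_isom_inv[OF iso] by (simp add: m_eq mink_isom_def)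
  ultimately obtain n' where "n' \<in> span {u, w}" "mink n' n' > 0" "\<tau> \<circ> mrefl m = mrefl n'"
    using boost_comp_mrefl[OF lin F perp] by blast
  then show ?thesis using that mrefl_comp_mink_isom[OF iso, of n] m_eq by metis
qed

lemma pure_hyperbolic_null_eigenframe:
  assumes "pure_hyperbolic \<tau>"
  obtains u w c where "null_eigenframe \<tau> u w c" "c \<noteq> 1" "axis \<tau> = span {u, w}"
    "\<forall>v\<in>mperp {u, w}. \<tau> v = v"
proof -
  have lox: "loxodromic \<tau>" using assms by (simp add: pure_hyperbolic_def)
  obtain u w c where F: "null_eigenframe \<tau> u w c" "c \<noteq> 1" using loxodromic_null_eigenframe[OF lox] by blast
  then have "axis \<tau> = span {u, w}" using loxodromic_axis[OF lox] by blast
  then show ?thesis using that F assms by (simp add: pure_hyperbolic_def mperp_span)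
qed

lemma mem_bank_pure_hyperbolic:
  assumes "pure_hyperbolic h" "normal_pair a b" "a \<in> axis h" "b \<in> mperp (axis h)"
  shows "mperp {a, b} \<in> bank h"
proof -
  have "hyp_orth (mperp {a}) (axis h)" "axis h \<subseteq> mperp {b}"
    using assms(3,4) hyp_orth_mperp_singleton_iff[of "axis h" a] subset_mperp_singleton_iff
    by (auto simp: axis_def)
  then have "\<exists>s t. hhyperplane s \<and> hyp_orth s (axis h) \<and> hhyperplane t \<and> axis h \<subseteq> t
      \<and> mperp {a, b} = s \<inter> t"
    using normal_pair_hhyperplanes[OF assms(2)] by blast
  then show ?thesis using assms(1) normal_pair_hhyperplanes(1)[OF assms(2)] by (simp add: bank_def)
qed

lemma halfturn_factorisation_pure_hyperbolic:
  assumes \<gamma>: "pure_hyperbolic \<gamma>" and s: "hhyperplane s" "hyp_orth s (axis \<gamma>)"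
    and t: "hhyperplane t" "axis \<gamma> \<subseteq> t"
  shows "\<exists>k1\<in>bank \<gamma>. \<exists>k2\<in>bank \<gamma>.
    \<gamma> = halfturn k1 \<circ> halfturn (s \<inter> t) \<and> \<gamma> = halfturn (s \<inter> t) \<circ> halfturn k2"
proof -
  obtain u w c where F: "null_eigenframe \<gamma> u w c" "c \<noteq> 1" and ax: "axis \<gamma> = span {u, w}"
    and perp: "\<forall>v\<in>mperp {u, w}. \<gamma> v = v"
    using pure_hyperbolic_null_eigenframe[OF \<gamma>] by blast
  have iso: "mink_isom \<gamma>" using \<gamma> by (simp add: pure_hyperbolic_def loxodromic_def orient_isom_imp_mink_isom)
  then have lin: "linear \<gamma>" by (simp add: mink_isom_def)
  obtain ns where ns: "mink ns ns > 0" "s = mperp {ns}" using hhyperplane_normal[OF s(1)] by blast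
  obtain nt where nt: "mink nt nt > 0" "t = mperp {nt}" using hhyperplane_normal[OF t(1)] by blast
  have nsS: "ns \<in> span {u, w}" using s(2) ns(2) hyp_orth_mperp_singleton_iff[OF subspace_span] ax by simp
  have ntS: "nt \<in> mperp (span {u, w})"
    using t(2) nt(2) ax subset_mperp_singleton_iff[of "axis \<gamma>" nt] by simp
  have k: "normal_pair ns nt" "s \<inter> t = mperp {ns, nt}"
    using ns nt nsS ntS by (auto simp: normal_pair_def mperp_def mink_sym mperp_pair)
  have comm: "\<gamma> \<circ> mrefl nt = mrefl nt \<circ> \<gamma>"
    using mink_isom_commutes_mrefl[OF iso] perp ntS by (simp add: mperp_span)
  obtain n1 where n1: "n1 \<in> span {u, w}" "mink n1 n1 > 0" "\<gamma> \<circ> mrefl ns = mrefl n1"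
    using boost_comp_mrefl[OF lin F(1) perp nsS ns(1)] by blast
  obtain n2 where n2: "n2 \<in> span {u, w}" "mink n2 n2 > 0" "mrefl ns \<circ> \<gamma> = mrefl n2"
    using mrefl_comp_boost[OF iso F(1) perp nsS ns(1)] by blast
  have pairs: "normal_pair n1 nt" "normal_pair n2 nt"
    using n1 n2 ntS nt(1) by (auto simp: normal_pair_def mperp_def mink_sym)
  have "\<gamma> = halfturn (mperp {n1, nt}) \<circ> halfturn (s \<inter> t)"
    using halfturn_factor_left[OF k(1) pairs(1), of \<gamma> \<gamma> id] n1(3) k(2) by simp
  moreover have "\<gamma> = halfturn (s \<inter> t) \<circ> halfturn (mperp {n2, nt})"
    using halfturn_factor_right[OF k(1) pairs(2), of \<gamma> \<gamma> id] n2(3) comm k(2) by simp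
  moreover have "mperp {n1, nt} \<in> bank \<gamma>" "mperp {n2, nt} \<in> bank \<gamma>"
    using mem_bank_pure_hyperbolic[OF \<gamma>] pairs n1(1) n2(1) ntS ax by auto
  ultimately show ?thesis by blast
qed

lemma elliptic_null_eigenvalue:
  assumes "elliptic \<rho>" "v \<noteq> 0" "mink v v = 0" "\<rho> v = a *\<^sub>R v"
  shows "a = 1"
proof -
  obtain z where z: "mink z z < 0" "\<rho> z = z" using assms(1) by (auto simp: elliptic_def)
  have "mink v z = mink (\<rho> v) (\<rho> z)"
    using assms(1) by (simp add: elliptic_def orient_isom_def)
  then have "(a - 1) * mink v z = 0" by (simp add: assms(4) z mink_simps algebra_simps)
  then show ?thesis using null_timelike_not_orthogonal[OF assms(3,2) z(1)] by simp
qed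

text \<open>An elliptic isometry commuting with \<open>\<tau>\<close> permutes the null eigenvectors of each
  eigenvalue; since it fixes a point of \<open>H^4\<close>, its own eigenvalue on them is \<open>1\<close>.\<close>

lemma elliptic_commuting_fixes_null_eigenframe:
  assumes \<rho>: "elliptic \<rho>" and \<tau>: "mink_isom \<tau>" and F: "null_eigenframe \<tau> u w c" "c \<noteq> 1"
    and comm: "\<tau> \<circ> \<rho> = \<rho> \<circ> \<tau>"
  shows "\<rho> u = u" "\<rho> w = w"
proof -
  have iso: "mink_isom \<rho>" using \<rho> by (simp add: elliptic_def orient_isom_imp_mink_isom)
  have fixes_eigen: "\<rho> x = x"
    if F': "null_eigenframe \<tau> x y e" "e \<noteq> 1" for x y e
  proof -
    have x: "mink x x = 0" "\<tau> x = e *\<^sub>R x" "x \<noteq> 0" using F' by (auto simp: null_eigenframe_def)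
    have "mink (\<rho> x) (\<rho> x) = 0" using iso x by (simp add: mink_isom_def)
    moreover have "\<tau> (\<rho> x) = e *\<^sub>R \<rho> x"
      using fun_cong[OF comm, of x] iso x by (simp add: mink_isom_def linear_scale)
    ultimately obtain a where a: "\<rho> x = a *\<^sub>R x"
      using null_eigenframe_eigenvector[OF \<tau> F'] by (auto simp: span_singleton)
    moreover have "\<rho> x \<noteq> 0" using x(3) mink_isom_inj[OF iso] iso
      by (metis injD linear_0 mink_isom_def)
    ultimately have "a = 1" using elliptic_null_eigenvalue[OF \<rho> x(3,1)] by simp
    then show ?thesis using a by simp
  qed
  show "\<rho> u = u" using fixes_eigen[OF F] .
  have "1 / c \<noteq> 1" using F(2) by simp
  then show "\<rho> w = w" using fixes_eigen[OF null_eigenframe_swap[OF F(1)]] by blast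
qed

lemma mem_bank_pure_loxodromic:
  assumes "pure_loxodromic h" "pure_hyperbolic \<tau>" "elliptic_I \<rho>" "h = \<tau> \<circ> \<rho>" "h = \<rho> \<circ> \<tau>"
    and ab: "normal_pair a b" "a \<in> axis \<tau>" "b \<in> mperp (fixspace \<rho>)"
  shows "mperp {a, b} \<in> bank h"
proof -
  have "hyp_orth (mperp {a}) (axis \<tau>)" "fixspace \<rho> \<subseteq> mperp {b}"
    using ab(2,3) hyp_orth_mperp_singleton_iff[of "axis \<tau>" a] subset_mperp_singleton_iff
    by (auto simp: axis_def)
  then have "\<exists>s t. hhyperplane s \<and> hyp_orth s (axis \<tau>) \<and> hhyperplane t \<and> fixspace \<rho> \<subseteq> t
      \<and> mperp {a, b} = s \<inter> t"
    using normal_pair_hhyperplanes[OF ab(1)] by blast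
  then show ?thesis using assms(1-5) normal_pair_hhyperplanes(1)[OF ab(1)]
    unfolding bank_def mem_Collect_eq by (intro conjI disjI2 disjI1) blast+
qed

lemma halfturn_factorisation_pure_loxodromic:
  assumes \<gamma>: "pure_loxodromic \<gamma>" and \<tau>: "pure_hyperbolic \<tau>" and \<rho>: "elliptic_I \<rho>"
    and split: "\<gamma> = \<tau> \<circ> \<rho>" "\<gamma> = \<rho> \<circ> \<tau>"
    and s: "hhyperplane s" "hyp_orth s (axis \<tau>)" and t: "hhyperplane t" "fixspace \<rho> \<subseteq> t"
  shows "\<exists>k1\<in>bank \<gamma>. \<exists>k2\<in>bank \<gamma>.
    \<gamma> = halfturn k1 \<circ> halfturn (s \<inter> t) \<and> \<gamma> = halfturn (s \<inter> t) \<circ> halfturn k2"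
proof -
  let ?P = "fixspace \<rho>"
  obtain u w c where F: "null_eigenframe \<tau> u w c" "c \<noteq> 1" and ax: "axis \<tau> = span {u, w}"
    and perp: "\<forall>v\<in>mperp {u, w}. \<tau> v = v"
    using pure_hyperbolic_null_eigenframe[OF \<tau>] by blast
  have isoT: "mink_isom \<tau>" using \<tau> by (simp add: pure_hyperbolic_def loxodromic_def orient_isom_imp_mink_isom)
  then have linT: "linear \<tau>" by (simp add: mink_isom_def)
  note P = fixspace_elliptic_I[OF \<rho>]
  have "\<rho> u = u" "\<rho> w = w"
    using elliptic_commuting_fixes_null_eigenframe[OF _ isoT F] \<rho> split by (auto simp: elliptic_I_def)
  then have axP: "span {u, w} \<subseteq> ?P" using P(3) by (simp add: span_minimal fixspace_def)
  obtain ns where ns: "mink ns ns > 0" "s = mperp {ns}" using hhyperplane_normal[OF s(1)] by blast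
  obtain nt where nt: "mink nt nt > 0" "t = mperp {nt}" using hhyperplane_normal[OF t(1)] by blast
  have nsS: "ns \<in> span {u, w}" using s(2) ns(2) hyp_orth_mperp_singleton_iff[OF subspace_span] ax by simp
  have ntP: "nt \<in> mperp ?P" using t(2) nt(2) subset_mperp_singleton_iff by blast
  then have ntS: "nt \<in> mperp (span {u, w})" using mperp_antimono[OF axP] by blast
  have k: "normal_pair ns nt" "s \<inter> t = mperp {ns, nt}"
    using ns nt nsS ntS by (auto simp: normal_pair_def mperp_def mink_sym mperp_pair)
  have comm: "\<rho> \<circ> mrefl ns = mrefl ns \<circ> \<rho>" "\<tau> \<circ> mrefl nt = mrefl nt \<circ> \<tau>"
    using mink_isom_commutes_mrefl[OF P(1)] mink_isom_commutes_mrefl[OF isoT] nsS axP perp ntS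
    by (auto simp: fixspace_def mperp_span)
  obtain a1 where a1: "a1 \<in> span {u, w}" "mink a1 a1 > 0" "\<tau> \<circ> mrefl ns = mrefl a1"
    using boost_comp_mrefl[OF linT F(1) perp nsS ns(1)] by blast
  obtain a2 where a2: "a2 \<in> span {u, w}" "mink a2 a2 > 0" "mrefl ns \<circ> \<tau> = mrefl a2"
    using mrefl_comp_boost[OF isoT F(1) perp nsS ns(1)] by blast
  obtain b1 where b1: "b1 \<in> mperp ?P" "mink b1 b1 > 0" "\<rho> \<circ> mrefl nt = mrefl b1"
    using rotation_comp_mrefl[OF P(1,2) ntP nt(1)] by blast
  obtain b2 where b2: "b2 \<in> mperp ?P" "mink b2 b2 > 0" "mrefl nt \<circ> \<rho> = mrefl b2"
    using mrefl_comp_rotation[OF P(1,2) ntP nt(1)] by blast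
  have "a1 \<in> ?P" "a2 \<in> ?P" using a1(1) a2(1) axP by blast+
  then have pairs: "normal_pair a1 b1" "normal_pair a2 b2"
    using a1 a2 b1 b2 by (auto simp: normal_pair_def mperp_def mink_sym)
  have "\<gamma> = halfturn (mperp {a1, b1}) \<circ> halfturn (s \<inter> t)"
    using halfturn_factor_left[OF k(1) pairs(1) split(1) comm(1) a1(3) b1(3)] k(2) by simp
  moreover have "\<gamma> = halfturn (s \<inter> t) \<circ> halfturn (mperp {a2, b2})"
    using halfturn_factor_right[OF k(1) pairs(2) split(1) comm(2) a2(3) b2(3)] k(2) by simp
  moreover have "mperp {a1, b1} \<in> bank \<gamma>" "mperp {a2, b2} \<in> bank \<gamma>"
    using mem_bank_pure_loxodromic[OF \<gamma> \<tau> \<rho> split] pairs a1(1) a2(1) b1(1) b2(1) ax by auto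
  ultimately show ?thesis by blast
qed

section \<open>Parabolic isometries\<close>

text \<open>\<open>infty_vec\<close> spans the null ray of \<open>\<infinity>\<close>, and \<open>space_vec b\<close> places \<open>b\<close> in the
  spatial coordinates \<open>1..3\<close>.\<close>

definition infty_vec :: "real^5" where "infty_vec = eucl_normal 0 1"
definition space_vec :: "real^3 \<Rightarrow> real^5" where "space_vec b = eucl_normal b 0"

lemma eucl_normal_nth:
  "(eucl_normal a c)$0 = c" "(eucl_normal a c)$1 = a$1" "(eucl_normal a c)$2 = a$2"
  "(eucl_normal a c)$3 = a$3" "(eucl_normal a c)$4 = c"
  by (simp_all add: eucl_normal_def)

lemma inner_real3: "(a::real^3) \<bullet> b = a$1 * b$1 + a$2 * b$2 + a$3 * b$3"
  by (simp add: inner_vec_def sum_3)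

lemma eucl_normal_eq: "eucl_normal a c = space_vec a + c *\<^sub>R infty_vec"
  by (simp add: vec5_eq_iff space_vec_def infty_vec_def eucl_normal_nth)

lemma mink_eucl_normal: "mink (eucl_normal a c) (eucl_normal a' c') = a \<bullet> a'"
  by (simp add: mink_def eucl_normal_nth inner_real3)

lemma mink_infty_infty: "mink infty_vec infty_vec = 0"
  and mink_space_infty: "mink (space_vec a) infty_vec = 0" "mink infty_vec (space_vec a) = 0"
  and mink_space_space: "mink (space_vec a) (space_vec a') = a \<bullet> a'"
  by (simp_all add: infty_vec_def space_vec_def mink_eucl_normal)

lemma space_vec_scale: "space_vec (l *\<^sub>R b) = l *\<^sub>R space_vec b"
  by (simp add: vec5_eq_iff space_vec_def eucl_normal_nth)

lemma infty_vec_nonzero: "infty_vec \<noteq> 0"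
  by (simp add: infty_vec_def vec5_eq_iff eucl_normal_nth)

lemma mink_time_unit_infty: "mink time_unit infty_vec = -1"
  and mink_time_unit_space: "mink time_unit (space_vec b) = 0"
  by (simp_all add: mink_def time_unit_def infty_vec_def space_vec_def eucl_normal_nth)

lemma par_transl_eq:
  "par_transl b v = v - mink v infty_vec *\<^sub>R (space_vec b + ((b \<bullet> b)/2) *\<^sub>R infty_vec)
     + mink v (space_vec b) *\<^sub>R infty_vec"
  by (simp add: vec5_eq_iff par_transl_def Let_def mink_def space_vec_def infty_vec_def
      eucl_normal_nth algebra_simps)

lemma mink_isom_par_transl: "mink_isom (par_transl b)"
proof -
  let ?E = "space_vec b" and ?F = infty_vec
  define B where "B = ?E + ((b \<bullet> b)/2) *\<^sub>R ?F"
  have pt: "par_transl b = (\<lambda>v. v - mink v ?F *\<^sub>R B + mink v ?E *\<^sub>R ?F)"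
    by (simp add: fun_eq_iff par_transl_eq B_def)
  have "linear (\<lambda>v. mink v a *\<^sub>R c)" for a c
    by (rule linearI) (simp_all add: mink_simps scaleR_add_left)
  then have lin: "linear (par_transl b)"
    unfolding pt by (intro linear_compose_add linear_compose_sub linear_ident)
  have BB: "mink B B = b \<bullet> b" "mink B ?F = 0" "mink ?F B = 0"
    by (simp_all add: B_def mink_simps mink_infty_infty mink_space_infty mink_space_space)
  have Bz: "mink z B = mink z ?E + ((b \<bullet> b)/2) * mink z ?F" "mink B z = mink z B" for z
    by (simp_all add: B_def mink_simps mink_sym[of z])
  have "mink (par_transl b x) (par_transl b y) = mink x y" for x y
  proof -
    have "mink (par_transl b x) (par_transl b y) =
       mink x y - mink y ?F * mink x B + mink y ?E * mink x ?F - mink x ?F * mink B y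
       + mink x ?F * mink y ?F * mink B B - mink x ?F * mink y ?E * mink B ?F
       + mink x ?E * mink ?F y - mink x ?E * mink y ?F * mink ?F B
       + mink x ?E * mink y ?E * mink ?F ?F"
      unfolding pt by (simp add: mink_simps algebra_simps)
    also have "\<dots> = mink x y"
      by (simp add: BB Bz mink_sym[of ?F y] mink_infty_infty mink_space_infty mink_space_space
          algebra_simps)
    finally show ?thesis .
  qed
  then show ?thesis using lin by (simp add: mink_isom_def)
qed

text \<open>For \<open>a\<close> parallel to \<open>b\<close>, translating by \<open>b\<close> after reflecting in the Euclidean plane
  \<open>a \<bullet> x = c\<close> is the reflection in the parallel plane \<open>a \<bullet> x = c + a \<bullet> b / 2\<close>.\<close>

lemma par_transl_comp_mrefl:
  assumes a: "a = l *\<^sub>R b" "a \<noteq> 0"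
  shows "par_transl b \<circ> mrefl (eucl_normal a c) = mrefl (eucl_normal a (c + (a \<bullet> b)/2))"
proof
  fix v
  let ?E = "space_vec b" and ?F = infty_vec
  define \<beta> where "\<beta> = b \<bullet> b"
  have l0: "l \<noteq> 0" and "b \<noteq> 0" using a by auto
  then have bp: "\<beta> > 0" by (simp add: \<beta>_def)
  define p where "p = mink v ?E"
  define q where "q = mink v ?F"
  define c' where "c' = c + l * \<beta> / 2"
  have e: "eucl_normal a c = l *\<^sub>R ?E + c *\<^sub>R ?F"
    by (simp add: eucl_normal_eq a space_vec_scale)
  have e': "eucl_normal a (c + (a \<bullet> b)/2) = l *\<^sub>R ?E + c' *\<^sub>R ?F"
    by (simp add: eucl_normal_eq a space_vec_scale c'_def \<beta>_def)
  have EE: "mink ?E ?E = \<beta>" by (simp add: mink_space_space \<beta>_def)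
  have norm: "mink (l *\<^sub>R ?E + d *\<^sub>R ?F) (l *\<^sub>R ?E + d *\<^sub>R ?F) = l*l*\<beta>" for d
    by (simp add: mink_simps mink_infty_infty mink_space_infty EE)
  have prod: "mink v (l *\<^sub>R ?E + d *\<^sub>R ?F) = l*p + d*q" for d
    by (simp add: mink_simps p_def q_def)
  define \<kappa> where "\<kappa> = 2 * (l*p + c*q) / (l*l*\<beta>)"
  define \<kappa>' where "\<kappa>' = 2 * (l*p + c'*q) / (l*l*\<beta>)"
  have w: "mrefl (eucl_normal a c) v = v - \<kappa> *\<^sub>R (l *\<^sub>R ?E + c *\<^sub>R ?F)"
    unfolding e mrefl_def norm prod \<kappa>_def ..
  have "mink (mrefl (eucl_normal a c) v) ?F = q" "mink (mrefl (eucl_normal a c) v) ?E = p - \<kappa> * l * \<beta>"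
    unfolding w by (simp_all add: mink_simps mink_infty_infty mink_space_infty EE p_def q_def)
  then have "(par_transl b \<circ> mrefl (eucl_normal a c)) v =
      v - \<kappa> *\<^sub>R (l *\<^sub>R ?E + c *\<^sub>R ?F) - q *\<^sub>R (?E + (\<beta>/2) *\<^sub>R ?F) + (p - \<kappa> * l * \<beta>) *\<^sub>R ?F"
    unfolding comp_apply par_transl_eq \<beta>_def[symmetric] by (simp only: w)
  also have "\<dots> = v - \<kappa>' *\<^sub>R (l *\<^sub>R ?E + c' *\<^sub>R ?F)"
    using l0 bp by (simp add: vec_eq_iff \<kappa>_def \<kappa>'_def c'_def field_simps)
  also have "\<dots> = mrefl (eucl_normal a (c + (a \<bullet> b)/2)) v"
    unfolding e' mrefl_def norm prod \<kappa>'_def ..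
  finally show "(par_transl b \<circ> mrefl (eucl_normal a c)) v = mrefl (eucl_normal a (c + (a \<bullet> b)/2)) v" .
qed

lemma mink_isom_par_conj: "par_conj \<tau> g b \<Longrightarrow> mink_isom \<tau>"
  unfolding par_conj_def
  by (metis mink_isom_par_transl mink_isom_comp mink_isom_inv orient_isom_imp_mink_isom)

lemma par_conj_comp_mrefl:
  assumes pc: "par_conj \<tau> g b" and a: "a = l *\<^sub>R b" "a \<noteq> 0"
  shows "\<tau> \<circ> mrefl (g (eucl_normal a c)) = mrefl (g (eucl_normal a (c + (a \<bullet> b)/2)))"
proof
  fix x
  have g: "mink_isom g" and t: "\<tau> = g \<circ> par_transl b \<circ> inv g"
    using pc by (auto simp: par_conj_def orient_isom_imp_mink_isom)
  have conj: "mrefl (g n) x = g (mrefl n (inv g x))" for n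
    using mink_isom_mrefl_conj[OF g, of n "inv g x"] mink_isom_f_inv_f[OF g] by simp
  show "(\<tau> \<circ> mrefl (g (eucl_normal a c))) x = mrefl (g (eucl_normal a (c + (a \<bullet> b)/2))) x"
    using fun_cong[OF par_transl_comp_mrefl[OF a, of c], of "inv g x"]
    by (simp add: t conj mink_isom_inv_f_f[OF g])
qed

lemma mrefl_comp_par_conj:
  assumes pc: "par_conj \<tau> g b" and a: "a = l *\<^sub>R b" "a \<noteq> 0"
  shows "mrefl (g (eucl_normal a c)) \<circ> \<tau> = mrefl (g (eucl_normal a (c - (a \<bullet> b)/2)))"
proof -
  have g: "mink_isom g" using pc by (auto simp: par_conj_def orient_isom_imp_mink_isom)
  let ?e = "g (eucl_normal a c)" and ?e' = "g (eucl_normal a (c - (a \<bullet> b)/2))"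
  have t: "\<tau> \<circ> mrefl ?e' = mrefl ?e" using par_conj_comp_mrefl[OF pc a, of "c - (a \<bullet> b)/2"] by simp
  have "mink ?e ?e \<noteq> 0" "mink ?e' ?e' \<noteq> 0"
    using g a(2) by (simp_all add: mink_isom_def mink_eucl_normal)
  then show ?thesis using fun_cong[OF t] by (auto simp: fun_eq_iff mrefl_mrefl) (metis mrefl_mrefl)
qed

lemma par_conj_fixes:
  assumes pc: "par_conj \<tau> g b"
    and v: "mink (inv g v) infty_vec = 0" "mink (inv g v) (space_vec b) = 0"
  shows "\<tau> v = v"
proof -
  have g: "mink_isom g" and t: "\<tau> = g \<circ> par_transl b \<circ> inv g"
    using pc by (auto simp: par_conj_def orient_isom_imp_mink_isom)
  have "par_transl b (inv g v) = inv g v" using v by (simp add: par_transl_eq)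
  then show ?thesis using t mink_isom_f_inv_f[OF g] by simp
qed

lemma parF_normal:
  assumes g: "mink_isom g" and s: "s \<in> parF g b"
  obtains a c l where "a \<noteq> 0" "a = l *\<^sub>R b" "s = mperp {g (eucl_normal a c)}"
  using s mink_isom_image_mperp_singleton[OF g] that by (auto simp: parF_def eucl_plane_hyp_def)

lemma parT_normal:
  assumes g: "mink_isom g" and t: "t \<in> parT g b"
  obtains a c where "a \<noteq> 0" "a \<bullet> b = 0" "t = mperp {g (eucl_normal a c)}"
  using t mink_isom_image_mperp_singleton[OF g] that by (auto simp: parT_def eucl_plane_hyp_def)

lemma mperp_mem_parF:
  assumes g: "mink_isom g" and "a \<noteq> 0" "a = l *\<^sub>R b"
  shows "mperp {g (eucl_normal a c)} \<in> parF g b"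
  using assms mink_isom_image_mperp_singleton[OF g, of "eucl_normal a c"]
  unfolding parF_def eucl_plane_hyp_def by blast

lemma mem_bank_pure_parabolic:
  assumes "pure_parabolic h" "par_conj h g b" "s \<in> parF g b" "t \<in> parT g b" "hplane (s \<inter> t)"
  shows "s \<inter> t \<in> bank h"
  using assms unfolding bank_def mem_Collect_eq by (intro conjI disjI2 disjI1) blast+

lemma halfturn_factorisation_pure_parabolic:
  assumes \<gamma>: "pure_parabolic \<gamma>" "par_conj \<gamma> g b" and s: "s \<in> parF g b" and t: "t \<in> parT g b"
  shows "\<exists>k1\<in>bank \<gamma>. \<exists>k2\<in>bank \<gamma>.
    \<gamma> = halfturn k1 \<circ> halfturn (s \<inter> t) \<and> \<gamma> = halfturn (s \<inter> t) \<circ> halfturn k2"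
proof -
  have g: "mink_isom g" using \<gamma>(2) by (auto simp: par_conj_def orient_isom_imp_mink_isom)
  have mi: "\<And>x y. mink (g x) (g y) = mink x y" using g by (simp add: mink_isom_def)
  obtain a c l where A: "a \<noteq> 0" "a = l *\<^sub>R b" "s = mperp {g (eucl_normal a c)}"
    using parF_normal[OF g s] by blast
  obtain a' c' where A': "a' \<noteq> 0" "a' \<bullet> b = 0" "t = mperp {g (eucl_normal a' c')}"
    using parT_normal[OF g t] by blast
  let ?ns = "g (eucl_normal a c)" and ?nt = "g (eucl_normal a' c')"
  let ?n1 = "g (eucl_normal a (c + (a \<bullet> b)/2))" and ?n2 = "g (eucl_normal a (c - (a \<bullet> b)/2))"
  have "a \<bullet> a' = 0" using A(2) A'(2) by (simp add: inner_commute)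
  then have pairs: "normal_pair ?ns ?nt" "normal_pair ?n1 ?nt" "normal_pair ?n2 ?nt"
    using A(1) A'(1) by (simp_all add: normal_pair_def mi mink_eucl_normal)
  have "\<gamma> ?nt = ?nt"
    using par_conj_fixes[OF \<gamma>(2)] A'(2)
    by (simp add: mink_isom_inv_f_f[OF g] infty_vec_def space_vec_def mink_eucl_normal inner_commute)
  then have comm: "\<gamma> \<circ> mrefl ?nt = mrefl ?nt \<circ> \<gamma>"
    by (rule mink_isom_commutes_mrefl[OF mink_isom_par_conj[OF \<gamma>(2)]])
  have st: "s \<inter> t = mperp {?ns, ?nt}" using A(3) A'(3) mperp_pair by simp
  have "\<gamma> = halfturn (mperp {?n1, ?nt}) \<circ> halfturn (s \<inter> t)"
    using halfturn_factor_left[OF pairs(1,2), of \<gamma> \<gamma> id] par_conj_comp_mrefl[OF \<gamma>(2) A(2,1)] st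
    by simp
  moreover have "\<gamma> = halfturn (s \<inter> t) \<circ> halfturn (mperp {?n2, ?nt})"
    using halfturn_factor_right[OF pairs(1,3), of \<gamma> \<gamma> id] mrefl_comp_par_conj[OF \<gamma>(2) A(2,1)] comm st
    by simp
  moreover have "mperp {?n1, ?nt} \<in> bank \<gamma>" "mperp {?n2, ?nt} \<in> bank \<gamma>"
    using mem_bank_pure_parabolic[OF \<gamma> mperp_mem_parF[OF g A(1,2)] t] A'(3) mperp_pair
      hplane_mperp_normal_pair[OF pairs(2)] hplane_mperp_normal_pair[OF pairs(3)] by auto
  ultimately show ?thesis by blast
qed

text \<open>\<open>N = par_transl b - id\<close> is nilpotent with \<open>N time_unit = B\<close>, \<open>N B = (b \<bullet> b) infty_vec\<close>,
  \<open>N infty_vec = 0\<close>. An isometry commuting with \<open>N\<close> therefore scales \<open>infty_vec\<close>, and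
  since it fixes a timelike vector, which is never orthogonal to a null one, the scalar is
  \<open>1\<close>; the same argument applied to \<open>B\<close> shows that \<open>B\<close> is fixed.\<close>

lemma par_transl_commuting_fixes:
  assumes iso: "mink_isom \<rho>" and b: "b \<noteq> 0" and z: "mink z z < 0" "\<rho> z = z"
    and comm: "\<And>v. \<rho> (par_transl b v) = par_transl b (\<rho> v)"
  shows "\<rho> infty_vec = infty_vec" "\<rho> (space_vec b) = space_vec b"
proof -
  have lin: "linear \<rho>" and mi: "\<And>x y. mink (\<rho> x) (\<rho> y) = mink x y"
    using iso by (auto simp: mink_isom_def)
  let ?E = "space_vec b" and ?F = infty_vec
  define \<beta> where "\<beta> = b \<bullet> b"
  have bp: "\<beta> > 0" using b by (simp add: \<beta>_def)
  define B where "B = ?E + (\<beta>/2) *\<^sub>R ?F"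
  define N where "N v = - mink v ?F *\<^sub>R B + mink v ?E *\<^sub>R ?F" for v
  have "par_transl b v = v + N v" for v by (simp add: par_transl_eq N_def B_def \<beta>_def)
  then have commN: "\<rho> (N v) = N (\<rho> v)" for v using comm[of v] lin by (simp add: linear_add)
  have BF: "mink B ?F = 0" "mink ?F B = 0"
    by (simp_all add: B_def mink_simps mink_infty_infty mink_space_infty)
  have BE: "mink B ?E = \<beta>" by (simp add: B_def mink_simps mink_space_space mink_space_infty \<beta>_def)
  have NB: "N B = \<beta> *\<^sub>R ?F" by (simp add: N_def BF BE)
  have NF: "N ?F = 0" by (simp add: N_def mink_infty_infty mink_space_infty)
  define lam where "lam = - mink (\<rho> time_unit) ?F"
  define mu where "mu = mink (\<rho> time_unit) ?E"
  have "\<rho> B = N (\<rho> time_unit)"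
    using commN[of time_unit] by (simp add: N_def mink_time_unit_infty mink_time_unit_space)
  then have rB: "\<rho> B = lam *\<^sub>R B + mu *\<^sub>R ?F" by (simp add: N_def lam_def mu_def)
  have "\<beta> *\<^sub>R \<rho> ?F = (lam * \<beta>) *\<^sub>R ?F"
    using commN[of B] lin
    by (simp add: NB rB NF linear_scale N_def mink_simps BF BE mink_infty_infty mink_space_infty)
  then have rF: "\<rho> ?F = lam *\<^sub>R ?F" using bp by (metis mult.commute scaleR_scaleR scaleR_cancel_left less_irrefl)
  have Fz: "mink ?F z \<noteq> 0" by (rule null_timelike_not_orthogonal[OF mink_infty_infty infty_vec_nonzero z(1)])
  have "mink ?F z = lam * mink ?F z" using mi[of ?F z] by (simp add: rF z(2) mink_simps)
  then have lam: "lam = 1" using Fz by simp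
  have "mink B z = mink B z + mu * mink ?F z" using mi[of B z] by (simp add: rB z(2) lam mink_simps)
  then have "mu = 0" using Fz by simp
  then have rB1: "\<rho> B = B" using rB lam by simp
  show rF1: "\<rho> ?F = ?F" using rF lam by simp
  have "\<rho> (B - (\<beta>/2) *\<^sub>R ?F) = B - (\<beta>/2) *\<^sub>R ?F"
    using lin by (simp add: linear_diff linear_scale rB1 rF1)
  then show "\<rho> ?E = ?E" by (simp add: B_def)
qed

lemma par_conj_commuting_elliptic_fixes:
  assumes pc: "par_conj \<tau> g b" and \<rho>: "elliptic \<rho>" and comm: "\<tau> \<circ> \<rho> = \<rho> \<circ> \<tau>"
  shows "\<rho> (g infty_vec) = g infty_vec" "\<rho> (g (space_vec b)) = g (space_vec b)"
proof -
  have g: "mink_isom g" and t: "\<tau> = g \<circ> par_transl b \<circ> inv g" and b: "b \<noteq> 0"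
    using pc by (auto simp: par_conj_def orient_isom_imp_mink_isom)
  have iso: "mink_isom \<rho>" using \<rho> by (simp add: elliptic_def orient_isom_imp_mink_isom)
  obtain z where z: "mink z z < 0" "\<rho> z = z" using \<rho> by (auto simp: elliptic_def)
  define \<rho>' where "\<rho>' = inv g \<circ> \<rho> \<circ> g"
  have iso': "mink_isom \<rho>'" unfolding \<rho>'_def by (intro mink_isom_comp mink_isom_inv g iso)
  have g_conj: "g (\<rho>' v) = \<rho> (g v)" for v by (simp add: \<rho>'_def mink_isom_f_inv_f[OF g])
  have "\<rho>' (par_transl b v) = par_transl b (\<rho>' v)" for v
    using fun_cong[OF comm, of "g v"] mink_isom_inv_f_f[OF g]
    by (simp add: \<rho>'_def t) (metis g_conj mink_isom_inv_f_f[OF g])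
  moreover have "mink (inv g z) (inv g z) < 0" "\<rho>' (inv g z) = inv g z"
    using z mink_isom_inv[OF g] by (simp_all add: \<rho>'_def mink_isom_def mink_isom_f_inv_f[OF g])
  ultimately have "\<rho>' infty_vec = infty_vec" "\<rho>' (space_vec b) = space_vec b"
    using par_transl_commuting_fixes[OF iso' b] by blast+
  then show "\<rho> (g infty_vec) = g infty_vec" "\<rho> (g (space_vec b)) = g (space_vec b)"
    using g_conj by metis+
qed

lemma par_conj_commuting_elliptic_I:
  assumes pc: "par_conj \<tau> g b" and \<rho>: "elliptic_I \<rho>" and comm: "\<tau> \<circ> \<rho> = \<rho> \<circ> \<tau>"
  shows "g (eucl_normal (l *\<^sub>R b) d) \<in> fixspace \<rho>" "mperp (fixspace \<rho>) \<subseteq> fixspace \<tau>"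
proof -
  have g: "mink_isom g" using pc by (simp add: par_conj_def orient_isom_imp_mink_isom)
  then have lg: "linear g" and mi: "\<And>x y. mink (g x) (g y) = mink x y" by (simp_all add: mink_isom_def)
  have fx: "g infty_vec \<in> fixspace \<rho>" "g (space_vec b) \<in> fixspace \<rho>"
    using par_conj_commuting_elliptic_fixes[OF pc _ comm] \<rho> by (auto simp: elliptic_I_def fixspace_def)
  then show "g (eucl_normal (l *\<^sub>R b) d) \<in> fixspace \<rho>"
    using fixspace_elliptic_I(1)[OF \<rho>] lg
    by (simp add: fixspace_def eucl_normal_eq space_vec_scale linear_add linear_scale mink_isom_def)
  show "mperp (fixspace \<rho>) \<subseteq> fixspace \<tau>"
  proof
    fix v assume "v \<in> mperp (fixspace \<rho>)"
    then have "mink (inv g v) infty_vec = 0" "mink (inv g v) (space_vec b) = 0"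
      using fx mi[of "inv g v"] mink_isom_f_inv_f[OF g] by (auto simp: mperp_def mink_sym)
    then show "v \<in> fixspace \<tau>" using par_conj_fixes[OF pc] by (simp add: fixspace_def)
  qed
qed

lemma mem_bank_screw_parabolic:
  assumes "screw_parabolic h" "par_conj \<tau> g b" "elliptic_I \<rho>" "h = \<tau> \<circ> \<rho>" "h = \<rho> \<circ> \<tau>"
    "s \<in> parF g b" "hhyperplane t" "fixspace \<rho> \<subseteq> t" "hplane (s \<inter> t)"
  shows "s \<inter> t \<in> bank h"
  using assms unfolding bank_def mem_Collect_eq by (intro conjI disjI2 disjI1) blast+

lemma halfturn_factorisation_screw_parabolic:
  assumes \<gamma>: "screw_parabolic \<gamma>" and pc: "par_conj \<tau> g b" and \<rho>: "elliptic_I \<rho>"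
    and split: "\<gamma> = \<tau> \<circ> \<rho>" "\<gamma> = \<rho> \<circ> \<tau>"
    and s: "s \<in> parF g b" and t: "hhyperplane t" "fixspace \<rho> \<subseteq> t"
  shows "\<exists>k1\<in>bank \<gamma>. \<exists>k2\<in>bank \<gamma>.
    \<gamma> = halfturn k1 \<circ> halfturn (s \<inter> t) \<and> \<gamma> = halfturn (s \<inter> t) \<circ> halfturn k2"
proof -
  let ?P = "fixspace \<rho>"
  have g: "mink_isom g" using pc by (simp add: par_conj_def orient_isom_imp_mink_isom)
  then have mi: "\<And>x y. mink (g x) (g y) = mink x y" by (simp add: mink_isom_def)
  have isoT: "mink_isom \<tau>" using mink_isom_par_conj[OF pc] .
  note P = fixspace_elliptic_I[OF \<rho>]
  have comm\<tau>\<rho>: "\<tau> \<circ> \<rho> = \<rho> \<circ> \<tau>" using split by simp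
  obtain a c l where A: "a \<noteq> 0" "a = l *\<^sub>R b" "s = mperp {g (eucl_normal a c)}"
    using parF_normal[OF g s] by blast
  have inP: "g (eucl_normal a d) \<in> ?P" for d
    using par_conj_commuting_elliptic_I(1)[OF pc \<rho> comm\<tau>\<rho>] A(2) by simp
  obtain nt where nt: "mink nt nt > 0" "t = mperp {nt}" using hhyperplane_normal[OF t(1)] by blast
  have ntP: "nt \<in> mperp ?P" using t(2) nt(2) subset_mperp_singleton_iff by blast
  then have "\<tau> nt = nt" using par_conj_commuting_elliptic_I(2)[OF pc \<rho> comm\<tau>\<rho>] by (auto simp: fixspace_def)
  then have comm: "\<rho> \<circ> mrefl (g (eucl_normal a c)) = mrefl (g (eucl_normal a c)) \<circ> \<rho>"
    "\<tau> \<circ> mrefl nt = mrefl nt \<circ> \<tau>"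
    using mink_isom_commutes_mrefl[OF P(1)] mink_isom_commutes_mrefl[OF isoT] inP
    by (auto simp: fixspace_def)
  let ?ns = "g (eucl_normal a c)"
  let ?n1 = "g (eucl_normal a (c + (a \<bullet> b)/2))" and ?n2 = "g (eucl_normal a (c - (a \<bullet> b)/2))"
  obtain b1 where b1: "b1 \<in> mperp ?P" "mink b1 b1 > 0" "\<rho> \<circ> mrefl nt = mrefl b1"
    using rotation_comp_mrefl[OF P(1,2) ntP nt(1)] by blast
  obtain b2 where b2: "b2 \<in> mperp ?P" "mink b2 b2 > 0" "mrefl nt \<circ> \<rho> = mrefl b2"
    using mrefl_comp_rotation[OF P(1,2) ntP nt(1)] by blast
  have "mink (g (eucl_normal a d)) (g (eucl_normal a d)) > 0" for d
    using A(1) by (simp add: mi mink_eucl_normal)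
  then have pairs: "normal_pair ?ns nt" "normal_pair ?n1 b1" "normal_pair ?n2 b2"
    using inP nt(1) ntP b1 b2 by (auto simp: normal_pair_def mperp_def mink_sym)
  have st: "s \<inter> t = mperp {?ns, nt}" using A(3) nt(2) mperp_pair by simp
  have "\<gamma> = halfturn (mperp {?n1, b1}) \<circ> halfturn (s \<inter> t)"
    using halfturn_factor_left[OF pairs(1,2) split(1) comm(1) par_conj_comp_mrefl[OF pc A(2,1)] b1(3)] st
    by simp
  moreover have "\<gamma> = halfturn (s \<inter> t) \<circ> halfturn (mperp {?n2, b2})"
    using halfturn_factor_right[OF pairs(1,3) split(1) comm(2) mrefl_comp_par_conj[OF pc A(2,1)] b2(3)] st
    by simp
  moreover have "mperp {?n1, b1} \<in> bank \<gamma>" "mperp {?n2, b2} \<in> bank \<gamma>"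
    using mem_bank_screw_parabolic[OF \<gamma> pc \<rho> split mperp_mem_parF[OF g A(1,2)]]
      normal_pair_hhyperplanes(1,3,4)[OF pairs(2)] normal_pair_hhyperplanes(1,3,4)[OF pairs(3)]
      b1(1) b2(1) subset_mperp_singleton_iff by auto
  ultimately show ?thesis by blast
qed

theorem theorem5p5:
  fixes \<gamma> :: "real^5 \<Rightarrow> real^5"
  assumes "orient_isom \<gamma>"
  shows "\<forall>k\<in>bank \<gamma>. \<exists>k1\<in>bank \<gamma>. \<exists>k2\<in>bank \<gamma>.
           \<gamma> = halfturn k1 \<circ> halfturn k \<and> \<gamma> = halfturn k \<circ> halfturn k2"
proof
  fix k assume k: "k \<in> bank \<gamma>"
  have "\<gamma> = id \<Longrightarrow> \<gamma> = halfturn k \<circ> halfturn k"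
    using k halfturn_halfturn by (simp add: bank_def)
  then show "\<exists>k1\<in>bank \<gamma>. \<exists>k2\<in>bank \<gamma>. \<gamma> = halfturn k1 \<circ> halfturn k \<and> \<gamma> = halfturn k \<circ> halfturn k2"
    using k k[unfolded bank_def mem_Collect_eq]
    by (elim conjE disjE exE bexE)
      (blast intro: halfturn_factorisation_point_reflection halfturn_factorisation_elliptic_I
        halfturn_factorisation_elliptic_II halfturn_factorisation_pure_hyperbolic
        halfturn_factorisation_pure_loxodromic halfturn_factorisation_pure_parabolic
        halfturn_factorisation_screw_parabolic)+
qed

end
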